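(* Let $f\in C^0([0,T];L^2(\Omega))$ and $u_h^0\in L^2(\Omega)$. Let $0=t_0<\dots<t_N=T$, $k_n:=t_n-t_{n-1}$, $f^n:=f(t_n)$, let $U_h^n\subseteq U$ be closed subspaces, and let $\mathbf u_h^n=(u_h^n,\boldsymbol\sigma_h^n)\in U_h^n$, $n=1,\dots,N$, be the solutions of $B_{k_n}(\mathbf u_h^n,\mathbf v_h)=F_n(\mathbf v_h;f^n,u_h^{n-1})$ for all $\mathbf v_h\in U_h^n$. Then for every $n=1,\dots,N$, $$\|u_h^n\|\le\sum_{j=1}^n k_j\|f^j\|+\|u_h^0\|.$$
   Context: $\Omega\subset\mathbb{R}^d$ is a bounded Lipschitz domain with polygonal boundary; $(\cdot,\cdot)$, $\|\cdot\|$ denote the $L^2(\Omega)$ inner product and norm. Coefficients: $\mathbf{A}\in L^\infty(\Omega)^{d\times d}$ symmetric with $\lambda_{\min}(\mathbf{A})\ge\alpha_0>0$ a.e., $\boldsymbol\beta\in L^\infty(\Omega)^d$, $\gamma\in L^\infty(\Omega)$, with $\tfrac12\operatorname{div}\boldsymbol\beta+\gamma\in L^\infty(\Omega)$, $\tfrac12\operatorname{div}\boldsymbol\beta+\gamma\ge0$ a.e. $U:=H^1_0(\Omega)\times H(\operatorname{div},\Omega)$. For $k>0$ and $\mathbf{u}=(u,\boldsymbol\sigma),\mathbf{v}=(v,\boldsymbol\tau)\in U$: $\tilde b_k(\mathbf u,\mathbf v):=(-\operatorname{div}\boldsymbol\sigma-\boldsymbol\beta\cdot\nabla u+\gamma u,v)+k(-\operatorname{div}\boldsymbol\sigma-\boldsymbol\beta\cdot\nabla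 u+\gamma u,-\operatorname{div}\boldsymbol\tau-\boldsymbol\beta\cdot\nabla v+\gamma v)+(\mathbf A^{1/2}\nabla u-\mathbf A^{-1/2}\boldsymbol\sigma,\mathbf A^{1/2}\nabla v-\mathbf A^{-1/2}\boldsymbol\tau)$; $b_k(\mathbf u,\mathbf v):=(u,-\operatorname{div}\boldsymbol\tau-\boldsymbol\beta\cdot\nabla v+\gamma v)+\tilde b_k(\mathbf u,\mathbf v)$; $B_k(\mathbf u,\mathbf v):=\frac1k(u,v)+b_k(\mathbf u,\mathbf v)$. For $g,w\in L^2(\Omega)$: $F_n(\mathbf v;g,w):=k_n\big(g+\tfrac{w}{k_n},\tfrac{v}{k_n}-\operatorname{div}\boldsymbol\tau-\boldsymbol\beta\cdot\nabla v+\gamma v\big)$. *)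

theory Defs
  imports "HOL-Analysis.Analysis"
begin

definition lipschitz_domain :: "(real^'d::finite) set \<Rightarrow> bool" where
  "lipschitz_domain \<Omega> \<longleftrightarrow> open \<Omega> \<and> connected \<Omega> \<and> bounded \<Omega> \<and> \<Omega> \<noteq> {} \<and>
     (\<forall>x\<in>frontier \<Omega>. \<exists>r>0. \<exists>e g L. norm e = 1 \<and> L-lipschitz_on {z. z \<bullet> e = 0} g \<and>
        \<Omega> \<inter> ball x r = {y \<in> ball x r. y \<bullet> e > g (y - (y \<bullet> e) *\<^sub>R e)})"

definition polygonal_boundary :: "(real^'d::finite) set \<Rightarrow> bool" where
  "polygonal_boundary \<Omega> \<longleftrightarrow> (\<exists>F. finite F \<and> (\<forall>P\<in>F. polytope P) \<and> frontier \<Omega> = \<Union>F)"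

fun Ck :: "nat \<Rightarrow> (real^'d::finite \<Rightarrow> real) \<Rightarrow> bool" where
  "Ck 0 \<phi> = continuous_on UNIV \<phi>"
| "Ck (Suc k) \<phi> = ((\<forall>x. \<phi> differentiable (at x)) \<and>
      (\<forall>i. Ck k (\<lambda>x. frechet_derivative \<phi> (at x) (axis i 1))))"

definition cgrad :: "(real^'d::finite \<Rightarrow> real) \<Rightarrow> real^'d::finite \<Rightarrow> real^'d::finite" where
  "cgrad \<phi> x = (\<chi> i. frechet_derivative \<phi> (at x) (axis i 1))"

definition test_fun :: "(real^'d::finite) set \<Rightarrow> (real^'d::finite \<Rightarrow> real) \<Rightarrow> bool" where
  "test_fun \<Omega> \<phi> \<longleftrightarrow> (\<forall>k. Ck k \<phi>) \<and> compact (closure {x. \<phi> x \<noteq> 0}) \<and>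
     closure {x. \<phi> x \<noteq> 0} \<subseteq> \<Omega>"

definition L2 :: "(real^'d::finite) set \<Rightarrow> (real^'d::finite \<Rightarrow> real) \<Rightarrow> bool" where
  "L2 \<Omega> u \<longleftrightarrow> u \<in> borel_measurable (lebesgue_on \<Omega>) \<and> integrable (lebesgue_on \<Omega>) (\<lambda>x. (u x)\<^sup>2)"

definition L2v :: "(real^'d::finite) set \<Rightarrow> (real^'d::finite \<Rightarrow> real^'d::finite) \<Rightarrow> bool" where
  "L2v \<Omega> \<sigma> \<longleftrightarrow> (\<forall>i. L2 \<Omega> (\<lambda>x. \<sigma> x $ i))"

definition Linf :: "(real^'d::finite) set \<Rightarrow> (real^'d::finite \<Rightarrow> real) \<Rightarrow> bool" where
  "Linf \<Omega> u \<longleftrightarrow> u \<in> borel_measurable (lebesgue_on \<Omega>) \<and> (\<exists>C. AE x in lebesgue_on \<Omega>. \<bar>u x\<bar> \<le> C)"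

definition ip :: "(real^'d::finite) set \<Rightarrow> (real^'d::finite \<Rightarrow> real) \<Rightarrow> (real^'d::finite \<Rightarrow> real) \<Rightarrow> real" where
  "ip \<Omega> u v = (\<integral>x. u x * v x \<partial>lebesgue_on \<Omega>)"

definition ipv :: "(real^'d::finite) set \<Rightarrow> (real^'d::finite \<Rightarrow> real^'d::finite) \<Rightarrow> (real^'d::finite \<Rightarrow> real^'d::finite) \<Rightarrow> real" where
  "ipv \<Omega> \<sigma> \<tau> = (\<integral>x. \<sigma> x \<bullet> \<tau> x \<partial>lebesgue_on \<Omega>)"

definition nrm :: "(real^'d::finite) set \<Rightarrow> (real^'d::finite \<Rightarrow> real) \<Rightarrow> real" where
  "nrm \<Omega> u = sqrt (ip \<Omega> u u)"

definition nrmv :: "(real^'d::finite) set \<Rightarrow> (real^'d::finite \<Rightarrow> real^'d::finite) \<Rightarrow> real" where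
  "nrmv \<Omega> \<sigma> = sqrt (ipv \<Omega> \<sigma> \<sigma>)"

definition is_weak_grad :: "(real^'d::finite) set \<Rightarrow> (real^'d::finite \<Rightarrow> real) \<Rightarrow> (real^'d::finite \<Rightarrow> real^'d::finite) \<Rightarrow> bool" where
  "is_weak_grad \<Omega> u G \<longleftrightarrow> G \<in> borel_measurable (lebesgue_on \<Omega>) \<and>
     (\<forall>\<phi>. test_fun \<Omega> \<phi> \<longrightarrow> (\<forall>i.
        integrable (lebesgue_on \<Omega>) (\<lambda>x. u x * cgrad \<phi> x $ i) \<and>
        integrable (lebesgue_on \<Omega>) (\<lambda>x. G x $ i * \<phi> x) \<and>
        (\<integral>x. u x * cgrad \<phi> x $ i \<partial>lebesgue_on \<Omega>) = - (\<integral>x. G x $ i * \<phi> x \<partial>lebesgue_on \<Omega>)))"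

definition is_weak_div :: "(real^'d::finite) set \<Rightarrow> (real^'d::finite \<Rightarrow> real^'d::finite) \<Rightarrow> (real^'d::finite \<Rightarrow> real) \<Rightarrow> bool" where
  "is_weak_div \<Omega> \<sigma> D \<longleftrightarrow> D \<in> borel_measurable (lebesgue_on \<Omega>) \<and>
     (\<forall>\<phi>. test_fun \<Omega> \<phi> \<longrightarrow>
        integrable (lebesgue_on \<Omega>) (\<lambda>x. \<sigma> x \<bullet> cgrad \<phi> x) \<and>
        integrable (lebesgue_on \<Omega>) (\<lambda>x. D x * \<phi> x) \<and>
        (\<integral>x. \<sigma> x \<bullet> cgrad \<phi> x \<partial>lebesgue_on \<Omega>) = - (\<integral>x. D x * \<phi> x \<partial>lebesgue_on \<Omega>))"

definition wgrad :: "(real^'d::finite) set \<Rightarrow> (real^'d::finite \<Rightarrow> real) \<Rightarrow> real^'d::finite \<Rightarrow> real^'d::finite" where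
  "wgrad \<Omega> u = (SOME G. L2v \<Omega> G \<and> is_weak_grad \<Omega> u G)"

definition wdiv :: "(real^'d::finite) set \<Rightarrow> (real^'d::finite \<Rightarrow> real^'d::finite) \<Rightarrow> real^'d::finite \<Rightarrow> real" where
  "wdiv \<Omega> \<sigma> = (SOME D. L2 \<Omega> D \<and> is_weak_div \<Omega> \<sigma> D)"

definition H1 :: "(real^'d::finite) set \<Rightarrow> (real^'d::finite \<Rightarrow> real) \<Rightarrow> bool" where
  "H1 \<Omega> u \<longleftrightarrow> L2 \<Omega> u \<and> (\<exists>G. L2v \<Omega> G \<and> is_weak_grad \<Omega> u G)"

definition H10 :: "(real^'d::finite) set \<Rightarrow> (real^'d::finite \<Rightarrow> real) \<Rightarrow> bool" where
  "H10 \<Omega> u \<longleftrightarrow> H1 \<Omega> u \<and> (\<exists>\<phi>. (\<forall>n. test_fun \<Omega> (\<phi> n)) \<and>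
     (\<lambda>n. nrm \<Omega> (\<lambda>x. \<phi> n x - u x) + nrmv \<Omega> (\<lambda>x. cgrad (\<phi> n) x - wgrad \<Omega> u x)) \<longlonglongrightarrow> 0)"

definition Hdiv :: "(real^'d::finite) set \<Rightarrow> (real^'d::finite \<Rightarrow> real^'d::finite) \<Rightarrow> bool" where
  "Hdiv \<Omega> \<sigma> \<longleftrightarrow> L2v \<Omega> \<sigma> \<and> (\<exists>D. L2 \<Omega> D \<and> is_weak_div \<Omega> \<sigma> D)"

type_synonym 'd pr = "(real^'d \<Rightarrow> real) \<times> (real^'d \<Rightarrow> real^'d)"

definition Uspace :: "(real^'d::finite) set \<Rightarrow> 'd pr set" where
  "Uspace \<Omega> = {(u, \<sigma>). H10 \<Omega> u \<and> Hdiv \<Omega> \<sigma>}"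

definition Unorm :: "(real^'d::finite) set \<Rightarrow> 'd pr \<Rightarrow> real" where
  "Unorm \<Omega> w = sqrt ((nrm \<Omega> (fst w))\<^sup>2 + (nrmv \<Omega> (wgrad \<Omega> (fst w)))\<^sup>2
      + (nrmv \<Omega> (snd w))\<^sup>2 + (nrm \<Omega> (wdiv \<Omega> (snd w)))\<^sup>2)"

definition pdiff :: "('d::finite) pr \<Rightarrow> 'd pr \<Rightarrow> 'd pr" where
  "pdiff v w = ((\<lambda>x. fst v x - fst w x), (\<lambda>x. snd v x - snd w x))"

definition closed_subspace_U :: "(real^'d::finite) set \<Rightarrow> 'd pr set \<Rightarrow> bool" where
  "closed_subspace_U \<Omega> V \<longleftrightarrow> V \<subseteq> Uspace \<Omega> \<and>
     ((\<lambda>x. 0), (\<lambda>x. 0)) \<in> V \<and>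
     (\<forall>v\<in>V. \<forall>w\<in>V. ((\<lambda>x. fst v x + fst w x), (\<lambda>x. snd v x + snd w x)) \<in> V) \<and>
     (\<forall>c::real. \<forall>v\<in>V. ((\<lambda>x. c * fst v x), (\<lambda>x. c *\<^sub>R snd v x)) \<in> V) \<and>
     (\<forall>s w. (\<forall>n. s n \<in> V) \<longrightarrow> w \<in> Uspace \<Omega> \<longrightarrow>
        (\<lambda>n. Unorm \<Omega> (pdiff (s n) w)) \<longlonglongrightarrow> 0 \<longrightarrow> w \<in> V)"

definition msqrt :: "real^'d::finite^'d \<Rightarrow> real^'d::finite^'d" where
  "msqrt M = (THE S. transpose S = S \<and> (\<forall>\<xi>. 0 \<le> \<xi> \<bullet> (S *v \<xi>)) \<and> S ** S = M)"

definition lambda_min :: "real^'d::finite^'d \<Rightarrow> real" where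
  "lambda_min M = Min {l. \<exists>v. v \<noteq> 0 \<and> M *v v = l *\<^sub>R v}"

definition Lop :: "(real^'d::finite) set \<Rightarrow> (real^'d::finite \<Rightarrow> real^'d::finite) \<Rightarrow> (real^'d::finite \<Rightarrow> real) \<Rightarrow> 'd pr \<Rightarrow> real^'d::finite \<Rightarrow> real" where
  "Lop \<Omega> \<beta> \<gamma> w x = - wdiv \<Omega> (snd w) x - \<beta> x \<bullet> wgrad \<Omega> (fst w) x + \<gamma> x * fst w x"

definition Flux :: "(real^'d::finite) set \<Rightarrow> (real^'d::finite \<Rightarrow> real^'d::finite^'d) \<Rightarrow> 'd pr \<Rightarrow> real^'d::finite \<Rightarrow> real^'d::finite" where
  "Flux \<Omega> A w x = msqrt (A x) *v wgrad \<Omega> (fst w) x - matrix_inv (msqrt (A x)) *v snd w x"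

definition btilde where
  "btilde \<Omega> A \<beta> \<gamma> (k::real) w v =
     ip \<Omega> (Lop \<Omega> \<beta> \<gamma> w) (fst v) + k * ip \<Omega> (Lop \<Omega> \<beta> \<gamma> w) (Lop \<Omega> \<beta> \<gamma> v)
     + ipv \<Omega> (Flux \<Omega> A w) (Flux \<Omega> A v)"

definition bform where
  "bform \<Omega> A \<beta> \<gamma> (k::real) w v = ip \<Omega> (fst w) (Lop \<Omega> \<beta> \<gamma> v) + btilde \<Omega> A \<beta> \<gamma> k w v"

definition Bform where
  "Bform \<Omega> A \<beta> \<gamma> (k::real) w v = (1 / k) * ip \<Omega> (fst w) (fst v) + bform \<Omega> A \<beta> \<gamma> k w v"

definition Fform where
  "Fform \<Omega> \<beta> \<gamma> (k::real) v g w =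
     k * ip \<Omega> (\<lambda>x. g x + w x / k) (\<lambda>x. fst v x / k + Lop \<Omega> \<beta> \<gamma> v x)"

end

(*
  Test the scheme with the discrete solution itself. Green's formulas on H^1_0 x H(div) give
  (u, -div sigma) = (grad u, sigma) and 2 (u, -beta . grad u) = (u div beta, u), so
  2 (u, L u) >= 2 (grad u, sigma) since div beta / 2 + gamma >= 0; pointwise,
  |A^(1/2) grad u - A^(-1/2) sigma|^2 + 2 grad u . sigma = |A^(1/2) grad u|^2 + |A^(-1/2) sigma|^2.
  Hence 2 (u, L u) + P >= 0, with P the squared L2 norm of the flux residual. Multiplied by
  k = k_n, the discrete equation for u = u^n reads ||z||^2 + k P = (h, z) with z = u + k L u and
  h = k f^n + u^(n-1), and also ||u||^2 <= (h, z). By Cauchy-Schwarz ||z|| <= ||h||, hence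
  ||u^n|| <= ||h|| <= k_n ||f^n|| + ||u^(n-1)||, and summing over n gives the bound.
*)
theory Submission
  imports Defs
begin

section \<open>Spectral decomposition and square roots of symmetric matrices\<close>

lemma symmetric_matrix_inner_commute:
  fixes M :: "real^'n^'n"
  assumes "transpose M = M"
  shows "x \<bullet> (M *v y) = (M *v x) \<bullet> y"
  by (metis assms dot_lmul_matrix transpose_matrix_vector)

lemma quadratic_nonneg_imp_discriminant_le:
  fixes a b c :: real
  assumes c: "c \<ge> 0" and nonneg: "\<And>t. 0 \<le> a + 2*t*b + t^2*c"
  shows "b^2 \<le> a * c"
proof (cases "c = 0")
  case True
  have "b = 0"
  proof (rule ccontr)
    assume "b \<noteq> 0"
    have "0 \<le> a + 2*(-(a+1)/(2*b))*b + (-(a+1)/(2*b))^2*c" by (rule nonneg)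
    also have "\<dots> = -1" using True \<open>b \<noteq> 0\<close> by (simp add: field_simps)
    finally show False by simp
  qed
  then show ?thesis using nonneg[of 0] c by simp
next
  case False
  then have "c > 0" using c by simp
  have "0 \<le> a + 2*(-b/c)*b + (-b/c)^2*c" by (rule nonneg)
  also have "\<dots> = a - b^2/c" using \<open>c > 0\<close> by (simp add: field_simps power2_eq_square)
  finally show ?thesis using \<open>c > 0\<close> by (simp add: field_simps)
qed

lemma psd_on_subspace_null_vector:
  fixes N :: "'a::real_inner \<Rightarrow> 'a"
  assumes lin: "linear N" and sym: "\<And>a b. a \<bullet> N b = b \<bullet> N a"
    and W: "subspace W" and psd: "\<And>y. y \<in> W \<Longrightarrow> 0 \<le> y \<bullet> N y"
    and v: "v \<in> W" "v \<bullet> N v = 0" and Nv: "N v \<in> W"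
  shows "N v = 0"
proof -
  have "w \<bullet> N v = 0" if w: "w \<in> W" for w
  proof -
    have "0 \<le> 0 + 2*t*(w \<bullet> N v) + t^2*(w \<bullet> N w)" for t
    proof -
      have "v + t *\<^sub>R w \<in> W" using v w W by (simp add: subspace_add subspace_scale)
      then have "0 \<le> (v + t *\<^sub>R w) \<bullet> N (v + t *\<^sub>R w)" by (rule psd)
      also have "\<dots> = v \<bullet> N v + 2*t*(w \<bullet> N v) + t^2*(w \<bullet> N w)"
        using sym[of v w]
        by (simp add: linear_add[OF lin] linear_scale[OF lin] inner_add_left inner_add_right
            power2_eq_square algebra_simps)
      finally show ?thesis using v by simp
    qed
    then have "(w \<bullet> N v)^2 \<le> 0 * (w \<bullet> N w)"
      by (intro quadratic_nonneg_imp_discriminant_le psd w)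
    then show ?thesis by simp
  qed
  from this[OF Nv] show ?thesis by simp
qed

lemma symmetric_matrix_unit_eigenvector_in_subspace:
  fixes M :: "real^'n^'n"
  assumes sym: "transpose M = M" and W: "subspace W" and inv: "\<forall>x\<in>W. M *v x \<in> W"
    and nontriv: "W \<noteq> {0}"
  obtains v l where "v \<in> W" "norm v = 1" "M *v v = l *\<^sub>R v"
proof -
  define K where "K = W \<inter> sphere 0 1"
  obtain x where x: "x \<in> W" "x \<noteq> 0" using nontriv subspace_0[OF W] by blast
  have "(1 / norm x) *\<^sub>R x \<in> K" using x W by (auto simp: K_def subspace_scale)
  moreover have "compact K" unfolding K_def
    by (intro closed_Int_compact closed_subspace W compact_sphere)
  moreover have "continuous_on K (\<lambda>y. y \<bullet> (M *v y))"
    by (intro continuous_intros matrix_vector_mult_linear_continuous_on[unfolded o_def])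
  ultimately obtain v where vK: "v \<in> K" and vmax: "\<forall>y\<in>K. y \<bullet> (M *v y) \<le> v \<bullet> (M *v v)"
    using continuous_attains_sup by (metis empty_iff)
  define l where "l = v \<bullet> (M *v v)"
  have vW: "v \<in> W" and nv: "norm v = 1" using vK by (auto simp: K_def)
  \<comment> \<open>l is the maximal Rayleigh quotient on W, so N = l - M is positive semidefinite on W\<close>
  define N where "N y = l *\<^sub>R y - M *v y" for y
  have "N v = 0"
  proof (rule psd_on_subspace_null_vector[OF _ _ W _ vW])
    show "linear N" unfolding N_def[abs_def]
      by (intro linear_compose_sub linear_scale_self matrix_vector_mul_linear)
    show "a \<bullet> N b = b \<bullet> N a" for a b
      using symmetric_matrix_inner_commute[OF sym, of a b]
      by (simp add: N_def inner_diff_right inner_commute)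
    show "0 \<le> y \<bullet> N y" if y: "y \<in> W" for y
    proof (cases "y = 0")
      case False
      have "(1 / norm y) *\<^sub>R y \<in> K" using y False W by (auto simp: K_def subspace_scale)
      then have "((1 / norm y) *\<^sub>R y) \<bullet> (M *v ((1 / norm y) *\<^sub>R y)) \<le> l" using vmax l_def by blast
      then have "(y \<bullet> (M *v y)) / (norm y)^2 \<le> l"
        by (simp add: matrix_vector_mult_scaleR power2_eq_square)
      then show ?thesis
        using False by (simp add: N_def inner_diff_right divide_le_eq power2_norm_eq_inner mult.commute)
    qed (simp add: N_def)
    show "v \<bullet> N v = 0" using nv by (simp add: N_def inner_diff_right l_def norm_eq_1)
    show "N v \<in> W" using vW W inv by (simp add: N_def subspace_diff subspace_scale)
  qed
  then have "M *v v = l *\<^sub>R v" by (simp add: N_def)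
  then show ?thesis using that vW nv by blast
qed

lemma span_insert_orthogonal_complement:
  fixes v :: "real^'n"
  assumes W: "subspace W" and v: "v \<in> W" "norm v = 1" and B': "span B' = {y \<in> W. v \<bullet> y = 0}"
  shows "span (insert v B') = W"
proof
  have "B' \<subseteq> W" using B' span_superset by blast
  then show "span (insert v B') \<subseteq> W" using v W by (simp add: span_minimal)
  show "W \<subseteq> span (insert v B')"
  proof
    fix y assume "y \<in> W"
    then have "y - (y \<bullet> v) *\<^sub>R v \<in> span B'"
      using v W by (simp add: B' subspace_diff subspace_scale inner_diff_right inner_commute norm_eq_1)
    then have "y - (y \<bullet> v) *\<^sub>R v \<in> span (insert v B')" by (meson span_mono subset_insertI subsetD)
    then show "y \<in> span (insert v B')"
      by (metis diff_add_cancel span_add span_base span_scale insertI1)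
  qed
qed

lemma symmetric_matrix_eigenbasis_of_subspace:
  fixes M :: "real^'n^'n"
  assumes sym: "transpose M = M"
  shows "subspace W \<Longrightarrow> \<forall>x\<in>W. M *v x \<in> W \<Longrightarrow>
    \<exists>B. finite B \<and> B \<subseteq> W \<and> pairwise orthogonal B \<and> (\<forall>b\<in>B. norm b = 1) \<and> span B = W \<and>
        (\<forall>b\<in>B. \<exists>l. M *v b = l *\<^sub>R b)"
proof (induction "dim W" arbitrary: W)
  case 0
  then have "W = {0}" using subspace_0 by (auto simp: dim_eq_0)
  then show ?case by (intro exI[of _ "{}"]) auto
next
  case (Suc m)
  note W = Suc.prems(1) and inv = Suc.prems(2)
  have "W \<noteq> {0}" using Suc.hyps(2) by auto
  then obtain v l where vW: "v \<in> W" and nv: "norm v = 1" and Mv: "M *v v = l *\<^sub>R v"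
    using symmetric_matrix_unit_eigenvector_in_subspace[OF sym W inv] by blast
  define W' where "W' = {y \<in> W. \<forall>z\<in>span {v}. orthogonal z y}"
  have "dim W' + dim (span {v}) = dim W" unfolding W'_def
    using vW W by (intro dim_subspace_orthogonal_to_vectors) (auto simp: span_minimal)
  moreover have "dim (span {v}) = 1" using nv by (auto simp: dim_span)
  ultimately have dW': "m = dim W'" using Suc.hyps(2) by simp
  have W'_eq: "W' = W \<inter> {y. \<forall>z\<in>span {v}. orthogonal z y}" unfolding W'_def by auto
  have W': "subspace W'" unfolding W'_eq by (intro subspace_inter W subspace_orthogonal_to_vectors)
  have orth_v: "y \<in> W' \<longleftrightarrow> y \<in> W \<and> v \<bullet> y = 0" for y
    by (auto simp: W'_def orthogonal_def span_singleton)
  have "v \<bullet> (M *v y) = 0" if "v \<bullet> y = 0" for y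
    using that Mv symmetric_matrix_inner_commute[OF sym, of v y] by simp
  then have inv': "\<forall>y\<in>W'. M *v y \<in> W'" using inv orth_v by blast
  obtain B' where B': "finite B'" "B' \<subseteq> W'" "pairwise orthogonal B'" "\<forall>b\<in>B'. norm b = 1"
      "span B' = W'" "\<forall>b\<in>B'. \<exists>l. M *v b = l *\<^sub>R b"
    using Suc.hyps(1)[OF dW' W' inv'] by blast
  have B'W: "insert v B' \<subseteq> W" using B'(2) vW by (auto simp: W'_def)
  have "span (insert v B') = W"
    using span_insert_orthogonal_complement[OF W vW nv] B'(5) orth_v by blast
  moreover have "pairwise orthogonal (insert v B')"
    using B'(2,3) orth_v by (auto simp: pairwise_insert orthogonal_def inner_commute)
  ultimately show ?case
    using B' B'W nv Mv by (intro exI[of _ "insert v B'"]) auto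
qed

definition orthonormal_basis :: "(real^'n) set \<Rightarrow> bool" where
  "orthonormal_basis B \<longleftrightarrow> finite B \<and> pairwise orthogonal B \<and> (\<forall>b\<in>B. norm b = 1) \<and> span B = UNIV"

lemma symmetric_matrix_eigenbasis:
  fixes M :: "real^'n^'n"
  assumes "transpose M = M"
  obtains B lam where "orthonormal_basis B" "\<And>b. b \<in> B \<Longrightarrow> M *v b = lam b *\<^sub>R b"
proof -
  obtain B where "orthonormal_basis B" "\<forall>b\<in>B. \<exists>l. M *v b = l *\<^sub>R b"
    using symmetric_matrix_eigenbasis_of_subspace[OF assms, of UNIV]
    by (auto simp: orthonormal_basis_def)
  then show ?thesis using that by metis
qed

lemma orthonormal_basis_expansion:
  assumes "orthonormal_basis B"
  shows "(\<Sum>b\<in>B. (b \<bullet> x) *\<^sub>R b) = x"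
  using orthonormal_basis_expand[of B x] assms by (simp add: orthonormal_basis_def inner_commute)

lemma orthonormal_basis_inner_sum:
  assumes "orthonormal_basis B" "b0 \<in> B"
  shows "b0 \<bullet> (\<Sum>b\<in>B. c b *\<^sub>R b) = c b0"
proof -
  have "b0 \<bullet> b = (if b = b0 then 1 else 0)" if "b \<in> B" for b
    using assms that by (force simp: orthonormal_basis_def norm_eq_1 orthogonal_def pairwise_def)
  then have "b0 \<bullet> (\<Sum>b\<in>B. c b *\<^sub>R b) = (\<Sum>b\<in>B. if b = b0 then c b else 0)"
    by (auto simp: inner_sum_right intro: sum.cong)
  also have "\<dots> = c b0" using assms by (simp add: orthonormal_basis_def)
  finally show ?thesis .
qed

definition spectral_matrix :: "(real^'n) set \<Rightarrow> (real^'n \<Rightarrow> real) \<Rightarrow> real^'n^'n" where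
  "spectral_matrix B h = (\<chi> i j. \<Sum>b\<in>B. h b * b$i * b$j)"

lemma spectral_matrix_cong:
  "(\<And>b. b \<in> B \<Longrightarrow> g b = h b) \<Longrightarrow> spectral_matrix B g = spectral_matrix B h"
  by (simp add: spectral_matrix_def)

lemma spectral_matrix_mult_vector:
  "spectral_matrix B h *v x = (\<Sum>b\<in>B. (h b * (b \<bullet> x)) *\<^sub>R b)"
proof -
  have "(spectral_matrix B h *v x) $ i = (\<Sum>b\<in>B. \<Sum>j\<in>UNIV. h b * b$i * b$j * x$j)" for i
    by (simp add: spectral_matrix_def matrix_vector_mult_def sum_distrib_right sum.swap[of _ UNIV])
  then show ?thesis
    by (simp add: vec_eq_iff sum_component inner_vec_def sum_distrib_left sum_distrib_right algebra_simps)
qed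

lemma spectral_matrix_symmetric: "transpose (spectral_matrix B h) = spectral_matrix B h"
  by (simp add: spectral_matrix_def transpose_def vec_eq_iff mult.commute mult.left_commute)

lemma spectral_matrix_quadratic_form:
  "x \<bullet> (spectral_matrix B h *v x) = (\<Sum>b\<in>B. h b * (b \<bullet> x)^2)"
  by (simp add: spectral_matrix_mult_vector inner_sum_right power2_eq_square inner_commute mult.assoc)

lemma spectral_matrix_mult:
  assumes "orthonormal_basis B"
  shows "spectral_matrix B g ** spectral_matrix B h = spectral_matrix B (\<lambda>b. g b * h b)"
  unfolding matrix_eq
  by (simp add: matrix_vector_mul_assoc[symmetric] spectral_matrix_mult_vector
      orthonormal_basis_inner_sum[OF assms] mult.assoc cong: sum.cong)

lemma spectral_matrix_one:
  assumes "orthonormal_basis B"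
  shows "spectral_matrix B (\<lambda>b. 1) = mat 1"
  unfolding matrix_eq by (simp add: spectral_matrix_mult_vector orthonormal_basis_expansion[OF assms])

lemma eigenbasis_spectral_matrix:
  assumes B: "orthonormal_basis B" and eig: "\<And>b. b \<in> B \<Longrightarrow> M *v b = lam b *\<^sub>R b"
  shows "M = spectral_matrix B lam"
  unfolding matrix_eq
proof
  fix x
  have "M *v x = M *v (\<Sum>b\<in>B. (b \<bullet> x) *\<^sub>R b)" by (simp add: orthonormal_basis_expansion[OF B])
  also have "\<dots> = spectral_matrix B lam *v x"
    by (simp add: vec.sum matrix_vector_mult_scaleR eig spectral_matrix_mult_vector mult.commute
        cong: sum.cong)
  finally show "M *v x = spectral_matrix B lam *v x" .
qed

lemma lambda_min_le_eigenvalue: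
  assumes B: "orthonormal_basis B" and eig: "\<And>b. b \<in> B \<Longrightarrow> M *v b = lam b *\<^sub>R b"
    and b: "b \<in> B"
  shows "lambda_min M \<le> lam b"
proof -
  define E where "E = {l. \<exists>v. v \<noteq> 0 \<and> M *v v = l *\<^sub>R v}"
  have sym: "transpose M = M"
    using eigenbasis_spectral_matrix[OF B eig] spectral_matrix_symmetric by metis
  have "E \<subseteq> lam ` B"
  proof
    fix l assume "l \<in> E"
    then obtain v where "v \<noteq> 0" and Mv: "M *v v = l *\<^sub>R v" by (auto simp: E_def)
    then obtain b where b: "b \<in> B" "b \<bullet> v \<noteq> 0"
      using orthonormal_basis_expansion[OF B, of v] by (metis (no_types, lifting) scale_zero_left sum.neutral)
    have "l * (b \<bullet> v) = lam b * (b \<bullet> v)"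
      using symmetric_matrix_inner_commute[OF sym, of b v] Mv eig[OF b(1)] by simp
    then show "l \<in> lam ` B" using b by auto
  qed
  then have "finite E" using B finite_surj by (auto simp: orthonormal_basis_def)
  moreover have "b \<noteq> 0" using B b by (auto simp: orthonormal_basis_def)
  then have "lam b \<in> E" using eig[OF b] by (auto simp: E_def)
  ultimately show ?thesis by (simp add: lambda_min_def E_def[symmetric])
qed

lemma spectral_matrix_sqrt_square:
  assumes B: "orthonormal_basis B" and nonneg: "\<And>b. b \<in> B \<Longrightarrow> lam b \<ge> 0"
  shows "spectral_matrix B (\<lambda>b. sqrt (lam b)) ** spectral_matrix B (\<lambda>b. sqrt (lam b))
    = spectral_matrix B lam"
  unfolding spectral_matrix_mult[OF B] using nonneg by (intro spectral_matrix_cong) simp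

lemma msqrt_eq_spectral_matrix:
  assumes B: "orthonormal_basis B" and eig: "\<And>b. b \<in> B \<Longrightarrow> M *v b = lam b *\<^sub>R b"
    and pos: "\<And>b. b \<in> B \<Longrightarrow> lam b > 0"
  shows "msqrt M = spectral_matrix B (\<lambda>b. sqrt (lam b))"
  unfolding msqrt_def
proof (rule the_equality)
  let ?c = "\<lambda>b. sqrt (lam b)"
  have "spectral_matrix B ?c ** spectral_matrix B ?c = M"
    using pos by (simp add: spectral_matrix_sqrt_square[OF B] less_imp_le
        eigenbasis_spectral_matrix[OF B eig, symmetric])
  moreover have "0 \<le> x \<bullet> (spectral_matrix B ?c *v x)" for x
  proof -
    have "0 \<le> ?c b * (b \<bullet> x)^2" if "b \<in> B" for b using pos[OF that] by simp
    then show ?thesis by (simp add: spectral_matrix_quadratic_form sum_nonneg)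
  qed
  ultimately show "transpose (spectral_matrix B ?c) = spectral_matrix B ?c \<and>
      (\<forall>x. 0 \<le> x \<bullet> (spectral_matrix B ?c *v x)) \<and> spectral_matrix B ?c ** spectral_matrix B ?c = M"
    by (simp add: spectral_matrix_symmetric)
next
  fix T assume T: "transpose T = T \<and> (\<forall>x. 0 \<le> x \<bullet> (T *v x)) \<and> T ** T = M"
  have "T *v b = sqrt (lam b) *\<^sub>R b" if b: "b \<in> B" for b
  proof -
    define c where "c = sqrt (lam b)"
    define w where "w = T *v b - c *\<^sub>R b"
    have "T *v (T *v b) = (c * c) *\<^sub>R b"
      using T eig[OF b] pos[OF b] by (simp add: c_def matrix_vector_mul_assoc)
    \<comment> \<open>so w is an eigenvector of T for the negative eigenvalue -c, which positivity of T forbids\<close>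
    then have "T *v w = - (c *\<^sub>R w)"
      by (simp add: w_def matrix_vector_mult_diff_distrib matrix_vector_mult_scaleR algebra_simps)
    then have "w \<bullet> (T *v w) = - c * (w \<bullet> w)" by simp
    moreover have "0 \<le> w \<bullet> (T *v w)" using T by blast
    ultimately have "c * (w \<bullet> w) \<le> 0" by linarith
    moreover have "c > 0" using pos[OF b] by (simp add: c_def)
    ultimately have "w \<bullet> w \<le> 0" by (simp add: mult_le_0_iff)
    then have "w = 0" by (metis inner_eq_zero_iff inner_ge_zero order_antisym)
    then show ?thesis by (simp add: w_def c_def)
  qed
  then show "T = spectral_matrix B (\<lambda>b. sqrt (lam b))" by (rule eigenbasis_spectral_matrix[OF B])
qed

lemma positive_definite_msqrt:
  fixes M :: "real^'n^'n"
  assumes sym: "transpose M = M" and lm: "a \<le> lambda_min M" and a: "a > 0"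
  shows "transpose (msqrt M) = msqrt M" and "msqrt M ** msqrt M = M" and "invertible (msqrt M)"
    and "a * (x \<bullet> x) \<le> x \<bullet> (M *v x)"
proof -
  obtain B lam where B: "orthonormal_basis B" and eig: "\<And>b. b \<in> B \<Longrightarrow> M *v b = lam b *\<^sub>R b"
    using symmetric_matrix_eigenbasis[OF sym] by blast
  have ge: "a \<le> lam b" if "b \<in> B" for b
    using lm lambda_min_le_eigenvalue[OF B eig that] by linarith
  then have pos: "lam b > 0" if "b \<in> B" for b using a that by fastforce
  have S: "msqrt M = spectral_matrix B (\<lambda>b. sqrt (lam b))"
    by (rule msqrt_eq_spectral_matrix[OF B eig pos])
  show "transpose (msqrt M) = msqrt M" by (simp add: S spectral_matrix_symmetric)
  show "msqrt M ** msqrt M = M"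
    using pos by (simp add: S spectral_matrix_sqrt_square[OF B] less_imp_le
        eigenbasis_spectral_matrix[OF B eig, symmetric])
  have "spectral_matrix B (\<lambda>b. 1 / sqrt (lam b)) ** msqrt M = mat 1"
    unfolding S spectral_matrix_mult[OF B] spectral_matrix_one[OF B, symmetric]
  proof (intro spectral_matrix_cong)
    fix b assume "b \<in> B"
    then show "1 / sqrt (lam b) * sqrt (lam b) = 1" using pos[of b] by simp
  qed
  then show "invertible (msqrt M)" unfolding invertible_left_inverse by blast
  have "a * (x \<bullet> x) = (\<Sum>b\<in>B. a * (b \<bullet> x)^2)"
    using spectral_matrix_quadratic_form[of x B "\<lambda>b. 1"]
    by (simp add: spectral_matrix_one[OF B] sum_distrib_left)
  also have "\<dots> \<le> (\<Sum>b\<in>B. lam b * (b \<bullet> x)^2)"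
    using ge by (intro sum_mono mult_right_mono) auto
  also have "\<dots> = x \<bullet> (spectral_matrix B lam *v x)" by (simp add: spectral_matrix_quadratic_form)
  also have "\<dots> = x \<bullet> (M *v x)" using eigenbasis_spectral_matrix[OF B eig] by simp
  finally show "a * (x \<bullet> x) \<le> x \<bullet> (M *v x)" .
qed

text \<open>Cramer's rule gives M^-1 s by a formula that is visibly measurable in the entries of M.\<close>

definition cramer_solution :: "real^'n^'n \<Rightarrow> real^'n \<Rightarrow> real^'n" where
  "cramer_solution M s = (\<chi> k. det (\<chi> i j. if j = k then s$i else M$i$j) / det M)"

lemma cramer_solution_solves:
  fixes M :: "real^'n^'n"
  assumes "det M \<noteq> 0"
  shows "M *v cramer_solution M s = s"
  using cramer[OF assms] by (simp add: cramer_solution_def)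

lemma invertible_matrix_inv:
  fixes S :: "real^'n^'n"
  assumes "invertible S"
  shows "S ** matrix_inv S = mat 1" and "matrix_inv S ** S = mat 1"
  using someI_ex[OF assms[unfolded invertible_def]] by (auto simp: matrix_inv_def)

lemma symmetric_sqrt_flux_expansion:
  fixes S :: "real^'n^'n" and g s z :: "real^'n"
  assumes sym: "transpose S = S" and inv: "invertible S" and z: "(S ** S) *v z = s"
  defines "F \<equiv> S *v g - matrix_inv S *v s"
  shows "F \<bullet> F = g \<bullet> ((S ** S) *v g) - 2 * (g \<bullet> s) + s \<bullet> z"
    and "0 \<le> F \<bullet> F + 2 * (g \<bullet> s)"
proof -
  define y where "y = matrix_inv S *v s"
  have Sy: "S *v y = s"
    by (simp add: y_def matrix_vector_mul_assoc invertible_matrix_inv(1)[OF inv])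
  have "matrix_inv S *v (S *v (S *v z)) = y" using z by (simp add: y_def matrix_vector_mul_assoc)
  then have Sz: "S *v z = y"
    by (simp add: matrix_vector_mul_assoc matrix_mul_assoc invertible_matrix_inv(2)[OF inv])
  have gs: "(S *v g) \<bullet> y = g \<bullet> s"
    using symmetric_matrix_inner_commute[OF sym, of g y] Sy by simp
  have gg: "(S *v g) \<bullet> (S *v g) = g \<bullet> ((S ** S) *v g)"
    using symmetric_matrix_inner_commute[OF sym, of g "S *v g"] by (simp add: matrix_vector_mul_assoc)
  have yy: "y \<bullet> y = s \<bullet> z"
    using symmetric_matrix_inner_commute[OF sym, of z y] Sy Sz by (simp add: inner_commute)
  have F: "F \<bullet> F = (S *v g) \<bullet> (S *v g) - 2 * ((S *v g) \<bullet> y) + y \<bullet> y"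
    by (simp add: F_def y_def[symmetric] inner_diff_left inner_diff_right inner_commute)
  show "F \<bullet> F = g \<bullet> ((S ** S) *v g) - 2 * (g \<bullet> s) + s \<bullet> z" using F gs gg yy by simp
  show "0 \<le> F \<bullet> F + 2 * (g \<bullet> s)" using F gs by simp
qed

lemma positive_definite_solution_bounds:
  fixes M :: "real^'n^'n"
  assumes pd: "\<And>x. a * (x \<bullet> x) \<le> x \<bullet> (M *v x)" and a: "a > 0" and z: "M *v z = s"
  shows "0 \<le> s \<bullet> z" and "s \<bullet> z \<le> (s \<bullet> s) / a"
proof -
  have q: "a * (z \<bullet> z) \<le> s \<bullet> z" using pd[of z] z by (simp add: inner_commute)
  then show "0 \<le> s \<bullet> z" using a by (meson inner_ge_zero order_trans mult_nonneg_nonneg less_imp_le)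
  have cs: "s \<bullet> z \<le> norm s * norm z" by (rule norm_cauchy_schwarz)
  have "a * norm z \<le> norm s"
  proof (cases "z = 0")
    case False
    have "(a * norm z) * norm z \<le> norm s * norm z"
      using q cs by (simp add: power2_norm_eq_inner[symmetric] power2_eq_square mult.assoc)
    then show ?thesis using False by simp
  qed simp
  then have "norm z \<le> norm s / a" using a by (simp add: field_simps)
  then have "s \<bullet> z \<le> norm s * (norm s / a)" using cs by (meson mult_left_mono norm_ge_zero order_trans)
  then show "s \<bullet> z \<le> (s \<bullet> s) / a" by (simp add: power2_norm_eq_inner[symmetric] power2_eq_square)
qed

section \<open>Square-integrable functions\<close>

lemma L2_measurable: "L2 \<Omega> f \<Longrightarrow> f \<in> borel_measurable (lebesgue_on \<Omega>)"
  by (simp add: L2_def)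

lemma L2_integrable_power2: "L2 \<Omega> f \<Longrightarrow> integrable (lebesgue_on \<Omega>) (\<lambda>x. (f x)^2)"
  by (simp add: L2_def)

lemma L2_integrable_mult:
  assumes f: "L2 \<Omega> f" and g: "L2 \<Omega> g"
  shows "integrable (lebesgue_on \<Omega>) (\<lambda>x. f x * g x)"
proof (rule Bochner_Integration.integrable_bound)
  show "integrable (lebesgue_on \<Omega>) (\<lambda>x. (f x)^2 + (g x)^2)"
    using f g by (simp add: L2_integrable_power2)
  show "(\<lambda>x. f x * g x) \<in> borel_measurable (lebesgue_on \<Omega>)"
    using L2_measurable[OF f] L2_measurable[OF g] by simp
  have "\<bar>f x * g x\<bar> \<le> (f x)^2 + (g x)^2" for x
  proof -
    have "2 * (\<bar>f x\<bar> * \<bar>g x\<bar>) \<le> (f x)^2 + (g x)^2"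
      using sum_squares_bound[of "\<bar>f x\<bar>" "\<bar>g x\<bar>"] by (simp add: mult.assoc)
    moreover have "0 \<le> \<bar>f x\<bar> * \<bar>g x\<bar>" by simp
    ultimately show ?thesis unfolding abs_mult by linarith
  qed
  then show "AE x in lebesgue_on \<Omega>. norm (f x * g x) \<le> norm ((f x)^2 + (g x)^2)" by simp
qed

lemma L2_add:
  assumes f: "L2 \<Omega> f" and g: "L2 \<Omega> g"
  shows "L2 \<Omega> (\<lambda>x. f x + g x)"
proof -
  have "integrable (lebesgue_on \<Omega>) (\<lambda>x. (f x)^2 + 2 * (f x * g x) + (g x)^2)"
    using L2_integrable_power2[OF f] L2_integrable_power2[OF g] L2_integrable_mult[OF f g] by simp
  then show ?thesis
    using L2_measurable[OF f] L2_measurable[OF g] by (simp add: L2_def power2_sum ac_simps)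
qed

lemma L2_scale: "L2 \<Omega> f \<Longrightarrow> L2 \<Omega> (\<lambda>x. c * f x)"
  using L2_measurable L2_integrable_power2 by (fastforce simp: L2_def power_mult_distrib)

lemma L2_diff: "L2 \<Omega> f \<Longrightarrow> L2 \<Omega> g \<Longrightarrow> L2 \<Omega> (\<lambda>x. f x - g x)"
  using L2_add[of \<Omega> f "\<lambda>x. (-1) * g x"] L2_scale[of \<Omega> g "-1"] by simp

lemma L2_sum: "finite S \<Longrightarrow> (\<And>i. i \<in> S \<Longrightarrow> L2 \<Omega> (f i)) \<Longrightarrow> L2 \<Omega> (\<lambda>x. \<Sum>i\<in>S. f i x)"
proof (induction S rule: finite_induct)
  case empty
  then show ?case by (simp add: L2_def)
next
  case (insert a S)
  then show ?case by (simp add: L2_add)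
qed

lemma abs_le_imp_power2_le: "\<bar>h\<bar> \<le> (C::real) \<Longrightarrow> h^2 \<le> C^2"
  by (meson abs_ge_zero order_trans power2_le_iff_abs_le)

lemma L2_mult_bounded:
  assumes f: "L2 \<Omega> f" and h: "h \<in> borel_measurable (lebesgue_on \<Omega>)"
    and bound: "AE x in lebesgue_on \<Omega>. \<bar>h x\<bar> \<le> C"
  shows "L2 \<Omega> (\<lambda>x. h x * f x)"
  unfolding L2_def
proof
  show "(\<lambda>x. h x * f x) \<in> borel_measurable (lebesgue_on \<Omega>)" using L2_measurable[OF f] h by simp
  show "integrable (lebesgue_on \<Omega>) (\<lambda>x. (h x * f x)^2)"
  proof (rule Bochner_Integration.integrable_bound)
    show "integrable (lebesgue_on \<Omega>) (\<lambda>x. C^2 * (f x)^2)" using L2_integrable_power2[OF f] by simp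
    show "(\<lambda>x. (h x * f x)^2) \<in> borel_measurable (lebesgue_on \<Omega>)" using L2_measurable[OF f] h by simp
    show "AE x in lebesgue_on \<Omega>. norm ((h x * f x)^2) \<le> norm (C^2 * (f x)^2)"
      using bound by eventually_elim (simp add: power_mult_distrib abs_le_imp_power2_le mult_right_mono)
  qed
qed

lemma ip_commute: "ip \<Omega> f g = ip \<Omega> g f"
  by (simp add: ip_def mult.commute)

lemma ip_self_nonneg: "0 \<le> ip \<Omega> f f"
  unfolding ip_def by (rule integral_nonneg_AE) simp

lemma nrm_nonneg: "0 \<le> nrm \<Omega> f"
  by (simp add: nrm_def ip_self_nonneg)

lemma nrm_power2: "(nrm \<Omega> f)^2 = ip \<Omega> f f"
  using ip_self_nonneg[of \<Omega> f] by (simp add: nrm_def)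

lemma ip_self_expand:
  assumes f: "L2 \<Omega> f" and g: "L2 \<Omega> g"
  shows "ip \<Omega> (\<lambda>x. a * f x + b * g x) (\<lambda>x. a * f x + b * g x)
    = a^2 * ip \<Omega> f f + 2 * a * b * ip \<Omega> f g + b^2 * ip \<Omega> g g"
proof -
  have "ip \<Omega> (\<lambda>x. a * f x + b * g x) (\<lambda>x. a * f x + b * g x)
      = (\<integral>x. a^2 * (f x * f x) + (2 * a * b) * (f x * g x) + b^2 * (g x * g x) \<partial>lebesgue_on \<Omega>)"
    unfolding ip_def by (rule Bochner_Integration.integral_cong) (simp_all add: power2_eq_square algebra_simps)
  also have "\<dots> = a^2 * ip \<Omega> f f + 2 * a * b * ip \<Omega> f g + b^2 * ip \<Omega> g g"
    using L2_integrable_mult[OF f f] L2_integrable_mult[OF f g] L2_integrable_mult[OF g g]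
    by (simp add: ip_def)
  finally show ?thesis .
qed

lemma ip_Cauchy_Schwarz:
  assumes f: "L2 \<Omega> f" and g: "L2 \<Omega> g"
  shows "\<bar>ip \<Omega> f g\<bar> \<le> nrm \<Omega> f * nrm \<Omega> g"
proof -
  have "0 \<le> ip \<Omega> f f + 2 * t * ip \<Omega> f g + t^2 * ip \<Omega> g g" for t
    using ip_self_nonneg[of \<Omega> "\<lambda>x. 1 * f x + t * g x"] ip_self_expand[OF f g, of 1 t] by simp
  then have "(ip \<Omega> f g)^2 \<le> ip \<Omega> f f * ip \<Omega> g g"
    by (intro quadratic_nonneg_imp_discriminant_le ip_self_nonneg)
  then have "sqrt ((ip \<Omega> f g)^2) \<le> sqrt (ip \<Omega> f f * ip \<Omega> g g)" by (rule real_sqrt_le_mono)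
  then show ?thesis by (simp add: nrm_def real_sqrt_mult)
qed

lemma nrm_triangle:
  assumes f: "L2 \<Omega> f" and g: "L2 \<Omega> g"
  shows "nrm \<Omega> (\<lambda>x. f x + g x) \<le> nrm \<Omega> f + nrm \<Omega> g"
proof -
  have "(nrm \<Omega> (\<lambda>x. f x + g x))^2 = ip \<Omega> f f + 2 * ip \<Omega> f g + ip \<Omega> g g"
    using ip_self_expand[OF f g, of 1 1] by (simp add: nrm_power2)
  also have "\<dots> \<le> (nrm \<Omega> f + nrm \<Omega> g)^2"
    using ip_Cauchy_Schwarz[OF f g] by (simp add: power2_sum nrm_power2)
  finally show ?thesis using nrm_nonneg power2_le_imp_le by (metis add_nonneg_nonneg)
qed

lemma nrm_scale: "nrm \<Omega> (\<lambda>x. c * f x) = \<bar>c\<bar> * nrm \<Omega> f"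
proof -
  have "ip \<Omega> (\<lambda>x. c * f x) (\<lambda>x. c * f x) = c^2 * ip \<Omega> f f"
    unfolding ip_def by (simp add: power2_eq_square algebra_simps)
  then show ?thesis by (simp add: nrm_def real_sqrt_mult)
qed

lemma nrm_mult_bounded_le:
  assumes f: "L2 \<Omega> f" and h: "h \<in> borel_measurable (lebesgue_on \<Omega>)"
    and bound: "AE x in lebesgue_on \<Omega>. \<bar>h x\<bar> \<le> C"
  shows "nrm \<Omega> (\<lambda>x. h x * f x) \<le> \<bar>C\<bar> * nrm \<Omega> f"
proof -
  have "ip \<Omega> (\<lambda>x. h x * f x) (\<lambda>x. h x * f x) \<le> (\<integral>x. C^2 * (f x * f x) \<partial>lebesgue_on \<Omega>)"
    unfolding ip_def
  proof (rule integral_mono_AE)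
    show "integrable (lebesgue_on \<Omega>) (\<lambda>x. h x * f x * (h x * f x))"
      by (rule L2_integrable_mult[OF L2_mult_bounded[OF f h bound] L2_mult_bounded[OF f h bound]])
    show "integrable (lebesgue_on \<Omega>) (\<lambda>x. C^2 * (f x * f x))" using L2_integrable_mult[OF f f] by simp
    show "AE x in lebesgue_on \<Omega>. h x * f x * (h x * f x) \<le> C^2 * (f x * f x)"
      using bound by eventually_elim
        (simp add: abs_le_imp_power2_le mult_right_mono power2_eq_square[symmetric] power_mult_distrib)
  qed
  also have "\<dots> = C^2 * ip \<Omega> f f" by (simp add: ip_def)
  finally have "sqrt (ip \<Omega> (\<lambda>x. h x * f x) (\<lambda>x. h x * f x)) \<le> sqrt (C^2 * ip \<Omega> f f)"
    by (rule real_sqrt_le_mono)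
  then show ?thesis by (simp add: nrm_def real_sqrt_mult)
qed

lemma ip_diff_expand:
  assumes a: "L2 \<Omega> a" and b: "L2 \<Omega> b" and a': "L2 \<Omega> a'" and b': "L2 \<Omega> b'"
  shows "ip \<Omega> a' b' - ip \<Omega> a b = ip \<Omega> (\<lambda>x. a' x - a x) (\<lambda>x. b' x - b x)
    + ip \<Omega> (\<lambda>x. a' x - a x) b + ip \<Omega> a (\<lambda>x. b' x - b x)"
proof -
  have da: "L2 \<Omega> (\<lambda>x. a' x - a x)" and db: "L2 \<Omega> (\<lambda>x. b' x - b x)"
    using L2_diff a b a' b' by blast+
  have "ip \<Omega> a' b' - ip \<Omega> a b = (\<integral>x. a' x * b' x - a x * b x \<partial>lebesgue_on \<Omega>)"
    using L2_integrable_mult[OF a' b'] L2_integrable_mult[OF a b] by (simp add: ip_def)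
  also have "\<dots> = (\<integral>x. (a' x - a x) * (b' x - b x) + (a' x - a x) * b x
      + a x * (b' x - b x) \<partial>lebesgue_on \<Omega>)"
    by (rule Bochner_Integration.integral_cong) (simp_all add: algebra_simps)
  also have "\<dots> = ip \<Omega> (\<lambda>x. a' x - a x) (\<lambda>x. b' x - b x)
      + ip \<Omega> (\<lambda>x. a' x - a x) b + ip \<Omega> a (\<lambda>x. b' x - b x)"
    using L2_integrable_mult[OF da db] L2_integrable_mult[OF da b] L2_integrable_mult[OF a db]
    by (simp add: ip_def)
  finally show ?thesis .
qed

lemma ip_tendsto:
  assumes a: "L2 \<Omega> a" and b: "L2 \<Omega> b" and an: "\<And>n. L2 \<Omega> (an n)" and bn: "\<And>n. L2 \<Omega> (bn n)"
    and lim_a: "(\<lambda>n. nrm \<Omega> (\<lambda>x. an n x - a x)) \<longlonglongrightarrow> 0"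
    and lim_b: "(\<lambda>n. nrm \<Omega> (\<lambda>x. bn n x - b x)) \<longlonglongrightarrow> 0"
  shows "(\<lambda>n. ip \<Omega> (an n) (bn n)) \<longlonglongrightarrow> ip \<Omega> a b"
proof -
  define ea where "ea n = nrm \<Omega> (\<lambda>x. an n x - a x)" for n
  define eb where "eb n = nrm \<Omega> (\<lambda>x. bn n x - b x)" for n
  define e where "e n = ea n * eb n + ea n * nrm \<Omega> b + nrm \<Omega> a * eb n" for n
  have bound: "norm (ip \<Omega> (an n) (bn n) - ip \<Omega> a b) \<le> e n" for n
  proof -
    have da: "L2 \<Omega> (\<lambda>x. an n x - a x)" and db: "L2 \<Omega> (\<lambda>x. bn n x - b x)"
      using L2_diff an bn a b by blast+
    show ?thesis
      using ip_diff_expand[OF a b an[of n] bn[of n]] ip_Cauchy_Schwarz[OF da db] ip_Cauchy_Schwarz[OF da b]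
        ip_Cauchy_Schwarz[OF a db]
      unfolding e_def ea_def eb_def real_norm_def by linarith
  qed
  have "e \<longlonglongrightarrow> 0 * 0 + 0 * nrm \<Omega> b + nrm \<Omega> a * 0"
    unfolding e_def using lim_a lim_b unfolding ea_def[symmetric] eb_def[symmetric]
    by (intro tendsto_intros)
  then have "e \<longlonglongrightarrow> 0" by simp
  then have "(\<lambda>n. ip \<Omega> (an n) (bn n) - ip \<Omega> a b) \<longlonglongrightarrow> 0"
    by (rule Lim_null_comparison[rotated]) (use bound in \<open>auto intro: always_eventually\<close>)
  then show ?thesis by (rule LIM_zero_cancel)
qed

lemma L2_mult_Linf: "Linf \<Omega> h \<Longrightarrow> L2 \<Omega> f \<Longrightarrow> L2 \<Omega> (\<lambda>x. h x * f x)"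
  unfolding Linf_def using L2_mult_bounded by blast

lemma L2_mult_Linf_tendsto:
  assumes h: "Linf \<Omega> h" and f: "L2 \<Omega> f" and fn: "\<And>n. L2 \<Omega> (fn n)"
    and lim: "(\<lambda>n. nrm \<Omega> (\<lambda>x. fn n x - f x)) \<longlonglongrightarrow> 0"
  shows "(\<lambda>n. nrm \<Omega> (\<lambda>x. h x * fn n x - h x * f x)) \<longlonglongrightarrow> 0"
proof -
  obtain C where C: "AE x in lebesgue_on \<Omega>. \<bar>h x\<bar> \<le> C" using h by (auto simp: Linf_def)
  have bound: "nrm \<Omega> (\<lambda>x. h x * fn n x - h x * f x) \<le> \<bar>C\<bar> * nrm \<Omega> (\<lambda>x. fn n x - f x)" for n
    using nrm_mult_bounded_le[OF L2_diff[OF fn f] _ C] h by (simp add: Linf_def right_diff_distrib)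
  show ?thesis
  proof (rule tendsto_sandwich[OF _ _ tendsto_const tendsto_mult_right_zero[OF lim]])
    show "\<forall>\<^sub>F n in sequentially. 0 \<le> nrm \<Omega> (\<lambda>x. h x * fn n x - h x * f x)"
      by (simp add: nrm_nonneg)
    show "\<forall>\<^sub>F n in sequentially. nrm \<Omega> (\<lambda>x. h x * fn n x - h x * f x)
        \<le> \<bar>C\<bar> * nrm \<Omega> (\<lambda>x. fn n x - f x)"
      using bound by simp
  qed
qed

lemma L2v_component: "L2v \<Omega> v \<Longrightarrow> L2 \<Omega> (\<lambda>x. v x $ i)"
  by (simp add: L2v_def)

lemma L2v_diff: "L2v \<Omega> v \<Longrightarrow> L2v \<Omega> w \<Longrightarrow> L2v \<Omega> (\<lambda>x. v x - w x)"
  by (simp add: L2v_def L2_diff)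

lemma integrable_inner_L2v:
  "L2v \<Omega> v \<Longrightarrow> L2v \<Omega> w \<Longrightarrow> integrable (lebesgue_on \<Omega>) (\<lambda>x. v x \<bullet> w x)"
  unfolding inner_vec_def by (simp add: L2v_component L2_integrable_mult)

lemma ipv_eq_sum_ip:
  assumes "L2v \<Omega> v" "L2v \<Omega> w"
  shows "ipv \<Omega> v w = (\<Sum>i\<in>UNIV. ip \<Omega> (\<lambda>x. v x $ i) (\<lambda>x. w x $ i))"
  unfolding ipv_def ip_def inner_vec_def
  using assms by (simp add: L2v_component L2_integrable_mult integral_sum)

lemma ipv_self_nonneg: "0 \<le> ipv \<Omega> v v"
  unfolding ipv_def by (rule integral_nonneg_AE) simp

lemma nrm_component_le_nrmv:
  assumes "L2v \<Omega> v"
  shows "nrm \<Omega> (\<lambda>x. v x $ i) \<le> nrmv \<Omega> v"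
proof -
  have "ip \<Omega> (\<lambda>x. v x $ i) (\<lambda>x. v x $ i) \<le> ipv \<Omega> v v"
    unfolding ipv_eq_sum_ip[OF assms assms] by (rule member_le_sum) (auto intro: ip_self_nonneg)
  then show ?thesis by (simp add: nrm_def nrmv_def)
qed

lemma L2_inner_Linf:
  assumes \<beta>: "\<And>i. Linf \<Omega> (\<lambda>x. \<beta> x $ i)" and v: "L2v \<Omega> v"
  shows "L2 \<Omega> (\<lambda>x. \<beta> x \<bullet> v x)"
  unfolding inner_vec_def using \<beta> v by (intro L2_sum) (auto intro: L2_mult_Linf L2v_component)

lemma ip_inner_Linf_eq_sum:
  assumes \<beta>: "\<And>i. Linf \<Omega> (\<lambda>x. \<beta> x $ i)" and a: "L2 \<Omega> a" and v: "L2v \<Omega> v"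
  shows "ip \<Omega> a (\<lambda>x. \<beta> x \<bullet> v x) = (\<Sum>i\<in>UNIV. ip \<Omega> (\<lambda>x. \<beta> x $ i * a x) (\<lambda>x. v x $ i))"
proof -
  have "integrable (lebesgue_on \<Omega>) (\<lambda>x. \<beta> x $ i * a x * v x $ i)" for i
    using \<beta> a v by (intro L2_integrable_mult L2_mult_Linf L2v_component)
  then show ?thesis
    unfolding ip_def inner_vec_def
    by (simp add: sum_distrib_left integral_sum[symmetric] mult.commute mult.left_commute)
qed

section \<open>Test functions and Green's formulas\<close>

lemma frechet_derivative_add_at:
  assumes "f differentiable (at x)" "g differentiable (at x)"
  shows "frechet_derivative (\<lambda>x. f x + g x) (at x)
    = (\<lambda>h. frechet_derivative f (at x) h + frechet_derivative g (at x) h)"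
  using assms by (intro frechet_derivative_at[symmetric] has_derivative_add)
    (simp_all add: frechet_derivative_works[symmetric])

lemma frechet_derivative_mult_at:
  fixes f g :: "'a::real_normed_vector \<Rightarrow> real"
  assumes "f differentiable (at x)" "g differentiable (at x)"
  shows "frechet_derivative (\<lambda>x. f x * g x) (at x)
    = (\<lambda>h. f x * frechet_derivative g (at x) h + frechet_derivative f (at x) h * g x)"
  using assms by (intro frechet_derivative_at[symmetric] has_derivative_mult)
    (simp_all add: frechet_derivative_works[symmetric])

lemma Ck_imp_continuous: "Ck k \<phi> \<Longrightarrow> continuous_on UNIV \<phi>"
  by (cases k) (auto intro: differentiable_imp_continuous_on differentiable_at_imp_differentiable_on)

lemma Ck_Suc_imp_Ck: "Ck (Suc k) \<phi> \<Longrightarrow> Ck k \<phi>"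
proof (induction k arbitrary: \<phi>)
  case 0
  then show ?case using Ck_imp_continuous by (metis Ck.simps(1))
next
  case (Suc k)
  then show ?case by (metis Ck.simps(2))
qed

lemma Ck_add: "Ck k \<phi> \<Longrightarrow> Ck k \<psi> \<Longrightarrow> Ck k (\<lambda>x. \<phi> x + \<psi> x)"
proof (induction k arbitrary: \<phi> \<psi>)
  case 0
  then show ?case by (simp add: continuous_on_add)
next
  case (Suc k)
  then show ?case by (simp add: frechet_derivative_add_at)
qed

lemma Ck_mult: "Ck k \<phi> \<Longrightarrow> Ck k \<psi> \<Longrightarrow> Ck k (\<lambda>x. \<phi> x * \<psi> x)"
proof (induction k arbitrary: \<phi> \<psi>)
  case 0
  then show ?case by (simp add: continuous_on_mult)
next
  case (Suc k)
  then have "Ck k \<phi>" "Ck k \<psi>" by (auto intro: Ck_Suc_imp_Ck)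
  with Suc show ?case by (simp add: frechet_derivative_mult_at Ck_add)
qed

lemma test_fun_mult_self: "test_fun \<Omega> \<phi> \<Longrightarrow> test_fun \<Omega> (\<lambda>x. \<phi> x * \<phi> x)"
  unfolding test_fun_def by (auto intro: Ck_mult)

lemma cgrad_mult_self:
  assumes "test_fun \<Omega> \<phi>"
  shows "cgrad (\<lambda>x. \<phi> x * \<phi> x) x = (2 * \<phi> x) *\<^sub>R cgrad \<phi> x"
proof -
  have "Ck (Suc 0) \<phi>" using assms by (simp add: test_fun_def)
  then have "\<phi> differentiable (at x)" by simp
  then show ?thesis by (simp add: cgrad_def frechet_derivative_mult_at vec_eq_iff)
qed

lemma continuous_compact_support_bounded:
  fixes f :: "'a::topological_space \<Rightarrow> real"
  assumes "continuous_on UNIV f" "compact K" "\<And>x. x \<notin> K \<Longrightarrow> f x = 0"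
  obtains B where "\<And>x. \<bar>f x\<bar> \<le> B"
proof -
  have "compact (f ` K)" using assms(1,2) continuous_on_subset compact_continuous_image by blast
  then obtain B where "\<forall>y\<in>f ` K. norm y \<le> B" using compact_imp_bounded bounded_iff by metis
  then have "\<bar>f x\<bar> \<le> max B 0" for x using assms(3)[of x] by (cases "x \<in> K") auto
  then show ?thesis using that by blast
qed

lemma L2_continuous_bounded:
  assumes f: "continuous_on UNIV f" and B: "\<And>x. \<bar>f x\<bar> \<le> B" and \<Omega>: "\<Omega> \<in> lmeasurable"
  shows "L2 \<Omega> f"
proof -
  interpret finite_measure "lebesgue_on \<Omega>" using finite_measure_lebesgue_on[OF \<Omega>] .
  have m: "f \<in> borel_measurable (lebesgue_on \<Omega>)"
    using \<Omega> by (intro continuous_imp_measurable_on_sets_lebesgue continuous_on_subset[OF f]) auto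
  moreover have "integrable (lebesgue_on \<Omega>) (\<lambda>x. (f x)^2)"
    using m B by (intro integrable_const_bound[where B="B^2"]) (auto simp: abs_le_imp_power2_le)
  ultimately show ?thesis by (simp add: L2_def)
qed

lemma test_fun_L2:
  assumes t: "test_fun \<Omega> \<phi>" and \<Omega>: "\<Omega> \<in> lmeasurable"
  shows "L2 \<Omega> \<phi>" and "L2 \<Omega> (\<lambda>x. cgrad \<phi> x $ i)"
proof -
  let ?K = "closure {x. \<phi> x \<noteq> 0}"
  have K: "compact ?K" using t by (simp add: test_fun_def)
  have C1: "Ck (Suc 0) \<phi>" using t by (simp add: test_fun_def)
  then have cont: "continuous_on UNIV \<phi>" by (rule Ck_imp_continuous)
  have dcont: "continuous_on UNIV (\<lambda>x. cgrad \<phi> x $ i)" using C1 by (simp add: cgrad_def)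
  have zero: "\<phi> x = 0" if "x \<notin> ?K" for x using that closure_subset[of "{x. \<phi> x \<noteq> 0}"] by auto
  obtain B where "\<And>x. \<bar>\<phi> x\<bar> \<le> B" using continuous_compact_support_bounded[OF cont K zero] by blast
  then show "L2 \<Omega> \<phi>" by (rule L2_continuous_bounded[OF cont _ \<Omega>])
  have dzero: "cgrad \<phi> x $ i = 0" if x: "x \<notin> ?K" for x
  proof -
    have "((\<lambda>y. 0) has_derivative (\<lambda>h. 0)) (at x)" by simp
    then have "(\<phi> has_derivative (\<lambda>h. 0)) (at x)"
    proof (rule has_derivative_transform_within_open[where s="- ?K"])
      show "open (- ?K)" by blast
      show "x \<in> - ?K" using x by simp
      show "0 = \<phi> y" if "y \<in> - ?K" for y using zero that by (metis ComplD)
    qed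
    then show ?thesis by (simp add: cgrad_def frechet_derivative_at[symmetric])
  qed
  obtain B' where "\<And>x. \<bar>cgrad \<phi> x $ i\<bar> \<le> B'"
    using continuous_compact_support_bounded[OF dcont K dzero] by blast
  then show "L2 \<Omega> (\<lambda>x. cgrad \<phi> x $ i)" by (rule L2_continuous_bounded[OF dcont _ \<Omega>])
qed

lemma cgrad_L2v: "test_fun \<Omega> \<phi> \<Longrightarrow> \<Omega> \<in> lmeasurable \<Longrightarrow> L2v \<Omega> (cgrad \<phi>)"
  by (simp add: L2v_def test_fun_L2)

lemma H10_L2: "H10 \<Omega> u \<Longrightarrow> L2 \<Omega> u"
  by (simp add: H10_def H1_def)

lemma H10_wgrad_L2v: "H10 \<Omega> u \<Longrightarrow> L2v \<Omega> (wgrad \<Omega> u)"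
  unfolding H10_def H1_def wgrad_def by (metis (mono_tags, lifting) someI)

lemma Hdiv_L2v: "Hdiv \<Omega> \<sigma> \<Longrightarrow> L2v \<Omega> \<sigma>"
  by (simp add: Hdiv_def)

lemma Hdiv_wdiv:
  assumes "Hdiv \<Omega> \<sigma>"
  shows "L2 \<Omega> (wdiv \<Omega> \<sigma>)" and "is_weak_div \<Omega> \<sigma> (wdiv \<Omega> \<sigma>)"
  using assms unfolding Hdiv_def wdiv_def by (metis (mono_tags, lifting) someI)+

lemma H10_test_approximation:
  assumes \<Omega>: "\<Omega> \<in> lmeasurable" and u: "H10 \<Omega> u"
  obtains \<phi> where "\<And>n. test_fun \<Omega> (\<phi> n)" and "(\<lambda>n. nrm \<Omega> (\<lambda>x. \<phi> n x - u x)) \<longlonglongrightarrow> 0"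
    and "\<And>i. (\<lambda>n. nrm \<Omega> (\<lambda>x. cgrad (\<phi> n) x $ i - wgrad \<Omega> u x $ i)) \<longlonglongrightarrow> 0"
proof -
  obtain \<phi> where t: "\<And>n. test_fun \<Omega> (\<phi> n)"
    and lim: "(\<lambda>n. nrm \<Omega> (\<lambda>x. \<phi> n x - u x) + nrmv \<Omega> (\<lambda>x. cgrad (\<phi> n) x - wgrad \<Omega> u x)) \<longlonglongrightarrow> 0"
    using u unfolding H10_def by blast
  have nrmv_nonneg: "0 \<le> nrmv \<Omega> v" for v by (simp add: nrmv_def ipv_self_nonneg)
  have lim_u: "(\<lambda>n. nrm \<Omega> (\<lambda>x. \<phi> n x - u x)) \<longlonglongrightarrow> 0"
    by (rule tendsto_sandwich[OF _ _ tendsto_const lim]) (simp_all add: nrm_nonneg nrmv_nonneg)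
  have comp_bound: "nrm \<Omega> (\<lambda>x. cgrad (\<phi> n) x $ i - wgrad \<Omega> u x $ i)
      \<le> nrm \<Omega> (\<lambda>x. \<phi> n x - u x) + nrmv \<Omega> (\<lambda>x. cgrad (\<phi> n) x - wgrad \<Omega> u x)" for n i
    using nrm_component_le_nrmv[OF L2v_diff[OF cgrad_L2v[OF t[of n] \<Omega>] H10_wgrad_L2v[OF u]], where i=i]
      nrm_nonneg[of \<Omega> "\<lambda>x. \<phi> n x - u x"] by simp
  have "(\<lambda>n. nrm \<Omega> (\<lambda>x. cgrad (\<phi> n) x $ i - wgrad \<Omega> u x $ i)) \<longlonglongrightarrow> 0" for i
    by (rule tendsto_sandwich[OF _ _ tendsto_const lim]) (simp_all add: nrm_nonneg comp_bound)
  with t lim_u show ?thesis using that by blast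
qed

lemma Green_H10_Hdiv:
  assumes \<Omega>: "\<Omega> \<in> lmeasurable" and u: "H10 \<Omega> u" and \<sigma>: "Hdiv \<Omega> \<sigma>"
  shows "ip \<Omega> u (wdiv \<Omega> \<sigma>) = - ipv \<Omega> \<sigma> (wgrad \<Omega> u)"
proof -
  obtain \<phi> where t: "\<And>n. test_fun \<Omega> (\<phi> n)" and lim_u: "(\<lambda>n. nrm \<Omega> (\<lambda>x. \<phi> n x - u x)) \<longlonglongrightarrow> 0"
    and lim_grad: "\<And>i. (\<lambda>n. nrm \<Omega> (\<lambda>x. cgrad (\<phi> n) x $ i - wgrad \<Omega> u x $ i)) \<longlonglongrightarrow> 0"
    using H10_test_approximation[OF \<Omega> u] by blast
  have \<sigma>L: "L2v \<Omega> \<sigma>" and GL: "L2v \<Omega> (wgrad \<Omega> u)" and DL: "L2 \<Omega> (wdiv \<Omega> \<sigma>)"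
    using \<sigma> u by (simp_all add: Hdiv_L2v H10_wgrad_L2v Hdiv_wdiv)
  have "(\<lambda>n. ip \<Omega> (\<lambda>x. \<sigma> x $ i) (\<lambda>x. cgrad (\<phi> n) x $ i))
      \<longlonglongrightarrow> ip \<Omega> (\<lambda>x. \<sigma> x $ i) (\<lambda>x. wgrad \<Omega> u x $ i)" for i
    by (rule ip_tendsto[OF L2v_component[OF \<sigma>L] L2v_component[OF GL] L2v_component[OF \<sigma>L]
          test_fun_L2(2)[OF t \<Omega>] _ lim_grad]) (simp add: nrm_def ip_def)
  then have "(\<lambda>n. \<Sum>i\<in>UNIV. ip \<Omega> (\<lambda>x. \<sigma> x $ i) (\<lambda>x. cgrad (\<phi> n) x $ i))
      \<longlonglongrightarrow> (\<Sum>i\<in>UNIV. ip \<Omega> (\<lambda>x. \<sigma> x $ i) (\<lambda>x. wgrad \<Omega> u x $ i))"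
    by (rule tendsto_sum)
  then have lim_left: "(\<lambda>n. ipv \<Omega> \<sigma> (cgrad (\<phi> n))) \<longlonglongrightarrow> ipv \<Omega> \<sigma> (wgrad \<Omega> u)"
    by (simp add: ipv_eq_sum_ip \<sigma>L GL cgrad_L2v[OF t \<Omega>])
  have weak: "ipv \<Omega> \<sigma> (cgrad (\<phi> n)) = - ip \<Omega> (wdiv \<Omega> \<sigma>) (\<phi> n)" for n
    using Hdiv_wdiv(2)[OF \<sigma>] t[of n] unfolding is_weak_div_def ipv_def ip_def by blast
  have "(\<lambda>n. ip \<Omega> (wdiv \<Omega> \<sigma>) (\<phi> n)) \<longlonglongrightarrow> ip \<Omega> (wdiv \<Omega> \<sigma>) u"
    by (rule ip_tendsto[OF DL H10_L2[OF u] DL test_fun_L2(1)[OF t \<Omega>] _ lim_u]) (simp add: nrm_def ip_def)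
  then have "(\<lambda>n. ipv \<Omega> \<sigma> (cgrad (\<phi> n))) \<longlonglongrightarrow> - ip \<Omega> (wdiv \<Omega> \<sigma>) u"
    unfolding weak by (rule tendsto_minus)
  with lim_left have "ipv \<Omega> \<sigma> (wgrad \<Omega> u) = - ip \<Omega> (wdiv \<Omega> \<sigma>) u"
    by (rule LIMSEQ_unique)
  then show ?thesis by (simp add: ip_commute)
qed

lemma weak_div_test_fun_transport:
  assumes wd: "is_weak_div \<Omega> \<beta> D" and \<psi>: "test_fun \<Omega> \<psi>"
  shows "2 * ip \<Omega> \<psi> (\<lambda>x. \<beta> x \<bullet> cgrad \<psi> x) = - ip \<Omega> (\<lambda>x. D x * \<psi> x) \<psi>"
proof -
  have "(\<integral>x. \<beta> x \<bullet> cgrad (\<lambda>x. \<psi> x * \<psi> x) x \<partial>lebesgue_on \<Omega>)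
      = - (\<integral>x. D x * (\<psi> x * \<psi> x) \<partial>lebesgue_on \<Omega>)"
    using wd test_fun_mult_self[OF \<psi>] unfolding is_weak_div_def by blast
  moreover have "\<beta> x \<bullet> cgrad (\<lambda>x. \<psi> x * \<psi> x) x = 2 * (\<psi> x * (\<beta> x \<bullet> cgrad \<psi> x))" for x
    by (simp add: cgrad_mult_self[OF \<psi>])
  ultimately show ?thesis by (simp add: ip_def mult.assoc)
qed

lemma Green_H10_transport:
  assumes \<Omega>: "\<Omega> \<in> lmeasurable" and u: "H10 \<Omega> u" and wd: "is_weak_div \<Omega> \<beta> D"
    and D: "Linf \<Omega> D" and \<beta>: "\<And>i. Linf \<Omega> (\<lambda>x. \<beta> x $ i)"
  shows "2 * ip \<Omega> u (\<lambda>x. \<beta> x \<bullet> wgrad \<Omega> u x) = - ip \<Omega> (\<lambda>x. D x * u x) u"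
proof -
  obtain \<phi> where t: "\<And>n. test_fun \<Omega> (\<phi> n)" and lim_u: "(\<lambda>n. nrm \<Omega> (\<lambda>x. \<phi> n x - u x)) \<longlonglongrightarrow> 0"
    and lim_grad: "\<And>i. (\<lambda>n. nrm \<Omega> (\<lambda>x. cgrad (\<phi> n) x $ i - wgrad \<Omega> u x $ i)) \<longlonglongrightarrow> 0"
    using H10_test_approximation[OF \<Omega> u] by blast
  have uL: "L2 \<Omega> u" and GL: "L2v \<Omega> (wgrad \<Omega> u)" using u by (simp_all add: H10_L2 H10_wgrad_L2v)
  have \<phi>L: "L2 \<Omega> (\<phi> n)" for n using test_fun_L2(1)[OF t \<Omega>] .
  have "(\<lambda>n. ip \<Omega> (\<lambda>x. \<beta> x $ i * \<phi> n x) (\<lambda>x. cgrad (\<phi> n) x $ i))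
      \<longlonglongrightarrow> ip \<Omega> (\<lambda>x. \<beta> x $ i * u x) (\<lambda>x. wgrad \<Omega> u x $ i)" for i
    by (rule ip_tendsto[OF L2_mult_Linf[OF \<beta> uL] L2v_component[OF GL] L2_mult_Linf[OF \<beta> \<phi>L]
          test_fun_L2(2)[OF t \<Omega>] L2_mult_Linf_tendsto[OF \<beta> uL \<phi>L lim_u] lim_grad])
  then have "(\<lambda>n. \<Sum>i\<in>UNIV. ip \<Omega> (\<lambda>x. \<beta> x $ i * \<phi> n x) (\<lambda>x. cgrad (\<phi> n) x $ i))
      \<longlonglongrightarrow> (\<Sum>i\<in>UNIV. ip \<Omega> (\<lambda>x. \<beta> x $ i * u x) (\<lambda>x. wgrad \<Omega> u x $ i))"
    by (rule tendsto_sum)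
  then have "(\<lambda>n. ip \<Omega> (\<phi> n) (\<lambda>x. \<beta> x \<bullet> cgrad (\<phi> n) x))
      \<longlonglongrightarrow> ip \<Omega> u (\<lambda>x. \<beta> x \<bullet> wgrad \<Omega> u x)"
    by (simp add: ip_inner_Linf_eq_sum[OF \<beta>] \<phi>L uL GL cgrad_L2v[OF t \<Omega>])
  then have lim_left: "(\<lambda>n. 2 * ip \<Omega> (\<phi> n) (\<lambda>x. \<beta> x \<bullet> cgrad (\<phi> n) x))
      \<longlonglongrightarrow> 2 * ip \<Omega> u (\<lambda>x. \<beta> x \<bullet> wgrad \<Omega> u x)"
    by (rule tendsto_mult_left)
  have "(\<lambda>n. ip \<Omega> (\<lambda>x. D x * \<phi> n x) (\<phi> n)) \<longlonglongrightarrow> ip \<Omega> (\<lambda>x. D x * u x) u"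
    by (rule ip_tendsto[OF L2_mult_Linf[OF D uL] uL L2_mult_Linf[OF D \<phi>L] \<phi>L
          L2_mult_Linf_tendsto[OF D uL \<phi>L lim_u] lim_u])
  then have "(\<lambda>n. 2 * ip \<Omega> (\<phi> n) (\<lambda>x. \<beta> x \<bullet> cgrad (\<phi> n) x)) \<longlonglongrightarrow> - ip \<Omega> (\<lambda>x. D x * u x) u"
    unfolding weak_div_test_fun_transport[OF wd t] by (rule tendsto_minus)
  with lim_left show ?thesis by (rule LIMSEQ_unique)
qed

section \<open>Coercivity and stability of one time step\<close>

lemma borel_measurable_inner_components:
  assumes "\<And>i. (\<lambda>x. v x $ i) \<in> borel_measurable M" "\<And>i. (\<lambda>x. w x $ i) \<in> borel_measurable M"
  shows "(\<lambda>x. v x \<bullet> (w x :: real^'n)) \<in> borel_measurable M"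
  unfolding inner_vec_def using assms by measurable

lemma borel_measurable_matrix_vector_mult_components:
  assumes "\<And>i j. (\<lambda>x. A x $ i $ j) \<in> borel_measurable M" "\<And>i. (\<lambda>x. w x $ i) \<in> borel_measurable M"
  shows "(\<lambda>x. (A x *v (w x :: real^'n)) $ i) \<in> borel_measurable M"
  unfolding matrix_vector_mult_def vec_lambda_beta using assms by measurable

lemma borel_measurable_cramer_solution_components:
  fixes A :: "'a \<Rightarrow> real^'n^'n"
  assumes "\<And>i j. (\<lambda>x. A x $ i $ j) \<in> borel_measurable M" "\<And>i. (\<lambda>x. s x $ i) \<in> borel_measurable M"
  shows "(\<lambda>x. cramer_solution (A x) (s x) $ k) \<in> borel_measurable M"
  unfolding cramer_solution_def det_def vec_lambda_beta using assms by measurable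

lemma borel_measurable_AE_eq_lebesgue_on:
  fixes f h :: "'a::euclidean_space \<Rightarrow> real"
  assumes S: "S \<in> sets lebesgue" and h: "h \<in> borel_measurable (lebesgue_on S)"
    and ae: "AE x in lebesgue_on S. h x = f x"
  shows "f \<in> borel_measurable (lebesgue_on S)"
proof -
  have "(\<lambda>x. if x \<in> S then h x else 0) \<in> borel_measurable lebesgue"
    using borel_measurable_if[OF S] h by blast
  moreover have "AE x in lebesgue. (if x \<in> S then h x else 0) = (if x \<in> S then f x else 0)"
    using ae S by (simp add: AE_restrict_space_iff)
  ultimately have "(\<lambda>x. if x \<in> S then f x else 0) \<in> borel_measurable lebesgue"
    by (rule borel_measurable_AE)
  then show ?thesis using borel_measurable_if[OF S] by blast
qed

lemma L2v_matrix_vector_mult_Linf: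
  assumes A: "\<forall>i j. Linf \<Omega> (\<lambda>x. A x $ i $ j)" and g: "L2v \<Omega> g"
  shows "L2v \<Omega> (\<lambda>x. A x *v g x)"
  unfolding L2v_def matrix_vector_mult_def vec_lambda_beta
  using A g by (intro allI L2_sum) (auto intro: L2_mult_Linf L2v_component)

lemma flux_pointwise:
  fixes M :: "real^'n^'n" and g s :: "real^'n"
  assumes sym: "transpose M = M" and lm: "\<alpha>0 \<le> lambda_min M" and \<alpha>0: "\<alpha>0 > 0"
  shows "(msqrt M *v g - matrix_inv (msqrt M) *v s) \<bullet> (msqrt M *v g - matrix_inv (msqrt M) *v s)
      = g \<bullet> (M *v g) - 2 * (g \<bullet> s) + s \<bullet> cramer_solution M s"
    and "0 \<le> (msqrt M *v g - matrix_inv (msqrt M) *v s) \<bullet> (msqrt M *v g - matrix_inv (msqrt M) *v s)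
      + 2 * (g \<bullet> s)"
    and "\<bar>s \<bullet> cramer_solution M s\<bar> \<le> (s \<bullet> s) / \<alpha>0"
proof -
  note S = positive_definite_msqrt[OF sym lm \<alpha>0]
  have "invertible M" using S(2,3) invertible_mult by metis
  then have solves: "M *v cramer_solution M s = s" by (simp add: cramer_solution_solves invertible_det_nz)
  show "(msqrt M *v g - matrix_inv (msqrt M) *v s) \<bullet> (msqrt M *v g - matrix_inv (msqrt M) *v s)
      = g \<bullet> (M *v g) - 2 * (g \<bullet> s) + s \<bullet> cramer_solution M s"
    and "0 \<le> (msqrt M *v g - matrix_inv (msqrt M) *v s) \<bullet> (msqrt M *v g - matrix_inv (msqrt M) *v s)
      + 2 * (g \<bullet> s)"
    using symmetric_sqrt_flux_expansion[OF S(1,3), of "cramer_solution M s" s g] solves S(2)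
    by simp_all
  show "\<bar>s \<bullet> cramer_solution M s\<bar> \<le> (s \<bullet> s) / \<alpha>0"
    using positive_definite_solution_bounds[OF S(4) \<alpha>0 solves] by simp
qed

lemma flux_integral_lower_bound:
  fixes \<Omega> :: "(real^'d) set" and A :: "real^'d \<Rightarrow> real^'d^'d" and g s :: "real^'d \<Rightarrow> real^'d"
  assumes \<Omega>: "\<Omega> \<in> sets lebesgue" and g: "L2v \<Omega> g" and s: "L2v \<Omega> s"
    and A_Linf: "\<forall>i j. Linf \<Omega> (\<lambda>x. A x $ i $ j)"
    and A_sym: "AE x in lebesgue_on \<Omega>. transpose (A x) = A x"
    and \<alpha>0: "\<alpha>0 > 0" and A_ell: "AE x in lebesgue_on \<Omega>. lambda_min (A x) \<ge> \<alpha>0"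
  defines "F \<equiv> \<lambda>x. msqrt (A x) *v g x - matrix_inv (msqrt (A x)) *v s x"
  shows "- 2 * ipv \<Omega> g s \<le> ipv \<Omega> F F"
proof -
  let ?M = "lebesgue_on \<Omega>"
  let ?c = "\<lambda>x. s x \<bullet> cramer_solution (A x) (s x)"
  \<comment> \<open>msqrt is only given by a definite description, so the measurability and integrability of
    F . F are obtained from this explicit almost-everywhere equal expression\<close>
  define H where "H x = g x \<bullet> (A x *v g x) - 2 * (g x \<bullet> s x) + ?c x" for x
  have pointwise: "AE x in ?M. F x \<bullet> F x = H x \<and> 0 \<le> F x \<bullet> F x + 2 * (g x \<bullet> s x)
      \<and> \<bar>?c x\<bar> \<le> (s x \<bullet> s x) / \<alpha>0"
    using A_sym A_ell
  proof eventually_elim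
    case (elim x)
    note fp = flux_pointwise[OF elim(1,2) \<alpha>0]
    show ?case using fp(1,2)[of "g x" "s x"] fp(3)[of "s x"] by (simp add: F_def H_def)
  qed
  have Am: "\<And>i j. (\<lambda>x. A x $ i $ j) \<in> borel_measurable ?M" using A_Linf by (simp add: Linf_def)
  have gm: "\<And>i. (\<lambda>x. g x $ i) \<in> borel_measurable ?M" and sm: "\<And>i. (\<lambda>x. s x $ i) \<in> borel_measurable ?M"
    using g s by (simp_all add: L2v_component L2_measurable)
  have cm: "?c \<in> borel_measurable ?M"
    by (intro borel_measurable_inner_components sm borel_measurable_cramer_solution_components Am)
  have Hm: "H \<in> borel_measurable ?M" unfolding H_def
    by (intro borel_measurable_add borel_measurable_diff borel_measurable_times borel_measurable_const
        borel_measurable_inner_components gm sm borel_measurable_matrix_vector_mult_components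
        borel_measurable_cramer_solution_components Am)
  have Hint: "integrable ?M H"
  proof -
    have "integrable ?M ?c"
    proof (rule Bochner_Integration.integrable_bound[OF _ cm])
      show "integrable ?M (\<lambda>x. (s x \<bullet> s x) / \<alpha>0)" using integrable_inner_L2v[OF s s] by simp
      show "AE x in ?M. norm (?c x) \<le> norm ((s x \<bullet> s x) / \<alpha>0)"
        using pointwise by eventually_elim (use \<alpha>0 in auto)
    qed
    then show ?thesis unfolding H_def
      using integrable_inner_L2v[OF g L2v_matrix_vector_mult_Linf[OF A_Linf g]] integrable_inner_L2v[OF g s]
      by simp
  qed
  have ae: "AE x in ?M. H x = F x \<bullet> F x" using pointwise by eventually_elim simp
  have FF: "integrable ?M (\<lambda>x. F x \<bullet> F x)"
    by (rule integrable_cong_AE_imp[OF Hint borel_measurable_AE_eq_lebesgue_on[OF \<Omega> Hm ae] ae])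
  have "- 2 * ipv \<Omega> g s = (\<integral>x. - 2 * (g x \<bullet> s x) \<partial>?M)" by (simp add: ipv_def)
  also have "\<dots> \<le> (\<integral>x. F x \<bullet> F x \<partial>?M)"
  proof (rule integral_mono_AE)
    show "integrable ?M (\<lambda>x. - 2 * (g x \<bullet> s x))" using integrable_inner_L2v[OF g s] by simp
    show "AE x in ?M. - 2 * (g x \<bullet> s x) \<le> F x \<bullet> F x" using pointwise by eventually_elim simp
  qed (rule FF)
  finally show ?thesis by (simp add: ipv_def)
qed

lemma Lop_L2:
  assumes u: "H10 \<Omega> u" and \<sigma>: "Hdiv \<Omega> \<sigma>"
    and \<beta>: "\<And>i. Linf \<Omega> (\<lambda>x. \<beta> x $ i)" and \<gamma>: "Linf \<Omega> \<gamma>"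
  shows "L2 \<Omega> (Lop \<Omega> \<beta> \<gamma> (u, \<sigma>))"
proof -
  have "L2 \<Omega> (\<lambda>x. ((-1) * wdiv \<Omega> \<sigma> x - \<beta> x \<bullet> wgrad \<Omega> u x) + \<gamma> x * u x)"
    using Hdiv_wdiv(1)[OF \<sigma>] L2_inner_Linf[OF \<beta> H10_wgrad_L2v[OF u]] L2_mult_Linf[OF \<gamma> H10_L2[OF u]]
    by (intro L2_add L2_diff L2_scale)
  then show ?thesis by (simp add: Lop_def[abs_def])
qed

lemma Linf_cancel_half_plus:
  assumes "D \<in> borel_measurable (lebesgue_on \<Omega>)" and "Linf \<Omega> (\<lambda>x. D x / 2 + \<gamma> x)" and "Linf \<Omega> \<gamma>"
  shows "Linf \<Omega> D"
proof -
  obtain C1 where "AE x in lebesgue_on \<Omega>. \<bar>D x / 2 + \<gamma> x\<bar> \<le> C1" using assms(2) by (auto simp: Linf_def)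
  moreover obtain C2 where "AE x in lebesgue_on \<Omega>. \<bar>\<gamma> x\<bar> \<le> C2" using assms(3) by (auto simp: Linf_def)
  ultimately have "AE x in lebesgue_on \<Omega>. \<bar>D x\<bar> \<le> 2 * (C1 + C2)"
    by eventually_elim (auto simp: abs_le_iff)
  then show ?thesis using assms(1) by (auto simp: Linf_def)
qed

lemma Lop_Flux_coercive:
  fixes \<Omega> :: "(real^'d) set" and A :: "real^'d \<Rightarrow> real^'d^'d"
  assumes \<Omega>: "\<Omega> \<in> lmeasurable" and u: "H10 \<Omega> u" and \<sigma>: "Hdiv \<Omega> \<sigma>"
    and A_Linf: "\<forall>i j. Linf \<Omega> (\<lambda>x. A x $ i $ j)"
    and A_sym: "AE x in lebesgue_on \<Omega>. transpose (A x) = A x"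
    and \<alpha>0: "\<alpha>0 > 0" and A_ell: "AE x in lebesgue_on \<Omega>. lambda_min (A x) \<ge> \<alpha>0"
    and \<beta>: "\<And>i. Linf \<Omega> (\<lambda>x. \<beta> x $ i)" and \<gamma>: "Linf \<Omega> \<gamma>"
    and D: "is_weak_div \<Omega> \<beta> D" "Linf \<Omega> (\<lambda>x. D x / 2 + \<gamma> x)"
      "AE x in lebesgue_on \<Omega>. D x / 2 + \<gamma> x \<ge> 0"
  shows "0 \<le> 2 * ip \<Omega> u (Lop \<Omega> \<beta> \<gamma> (u, \<sigma>)) + ipv \<Omega> (Flux \<Omega> A (u, \<sigma>)) (Flux \<Omega> A (u, \<sigma>))"
proof -
  let ?M = "lebesgue_on \<Omega>"
  define G where "G = wgrad \<Omega> u"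
  have uL: "L2 \<Omega> u" and GL: "L2v \<Omega> G" and \<sigma>L: "L2v \<Omega> \<sigma>"
    using u \<sigma> by (simp_all add: G_def H10_L2 H10_wgrad_L2v Hdiv_L2v)
  have D_Linf: "Linf \<Omega> D"
    using D(1) by (intro Linf_cancel_half_plus[OF _ D(2) \<gamma>]) (simp add: is_weak_div_def)
  have Du: "L2 \<Omega> (\<lambda>x. D x * u x)" and \<gamma>u: "L2 \<Omega> (\<lambda>x. \<gamma> x * u x)"
    using D_Linf \<gamma> uL by (simp_all add: L2_mult_Linf)
  have "ip \<Omega> u (Lop \<Omega> \<beta> \<gamma> (u, \<sigma>))
      = - ip \<Omega> u (wdiv \<Omega> \<sigma>) - ip \<Omega> u (\<lambda>x. \<beta> x \<bullet> G x) + ip \<Omega> u (\<lambda>x. \<gamma> x * u x)"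
    using L2_integrable_mult[OF uL Hdiv_wdiv(1)[OF \<sigma>]] L2_integrable_mult[OF uL L2_inner_Linf[OF \<beta> GL]]
      L2_integrable_mult[OF uL \<gamma>u]
    by (simp add: ip_def Lop_def G_def algebra_simps)
  also have "ip \<Omega> u (wdiv \<Omega> \<sigma>) = - ipv \<Omega> G \<sigma>"
    using Green_H10_Hdiv[OF \<Omega> u \<sigma>] by (simp add: G_def ipv_def inner_commute)
  also have "ip \<Omega> u (\<lambda>x. \<beta> x \<bullet> G x) = - ip \<Omega> (\<lambda>x. D x * u x) u / 2"
    using Green_H10_transport[OF \<Omega> u D(1) D_Linf \<beta>] by (simp add: G_def)
  finally have L: "2 * ip \<Omega> u (Lop \<Omega> \<beta> \<gamma> (u, \<sigma>))
      = 2 * ipv \<Omega> G \<sigma> + 2 * (ip \<Omega> (\<lambda>x. D x * u x) u / 2 + ip \<Omega> u (\<lambda>x. \<gamma> x * u x))"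
    by simp
  have "ip \<Omega> (\<lambda>x. D x * u x) u / 2 + ip \<Omega> u (\<lambda>x. \<gamma> x * u x)
      = (\<integral>x. (D x / 2 + \<gamma> x) * (u x)^2 \<partial>?M)"
    using L2_integrable_mult[OF Du uL] L2_integrable_mult[OF uL \<gamma>u]
    by (simp add: ip_def power2_eq_square algebra_simps)
  also have "\<dots> \<ge> 0" using D(3) by (intro integral_nonneg_AE) (auto elim: eventually_mono)
  finally have "0 \<le> ip \<Omega> (\<lambda>x. D x * u x) u / 2 + ip \<Omega> u (\<lambda>x. \<gamma> x * u x)" .
  moreover have "- 2 * ipv \<Omega> G \<sigma> \<le> ipv \<Omega> (Flux \<Omega> A (u, \<sigma>)) (Flux \<Omega> A (u, \<sigma>))"
    using flux_integral_lower_bound[OF _ GL \<sigma>L A_Linf A_sym \<alpha>0 A_ell] \<Omega>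
    by (simp add: Flux_def[abs_def] G_def fmeasurableD)
  ultimately show ?thesis unfolding L by (smt (verit))
qed

lemma implicit_step_norm_bound:
  fixes k :: real
  assumes k: "k > 0" and u: "L2 \<Omega> u" and L: "L2 \<Omega> L" and g: "L2 \<Omega> g" and w: "L2 \<Omega> w"
    and P: "0 \<le> P" and coercive: "0 \<le> 2 * ip \<Omega> u L + P"
    and eq: "(1/k) * ip \<Omega> u u + (ip \<Omega> u L + (ip \<Omega> L u + k * ip \<Omega> L L + P))
      = k * ip \<Omega> (\<lambda>x. g x + w x / k) (\<lambda>x. u x / k + L x)"
  shows "nrm \<Omega> u \<le> k * nrm \<Omega> g + nrm \<Omega> w"
proof -
  \<comment> \<open>multiplied by k, the identity reads (z, z) + k P = (h, z) for z = u + k L and h = k g + w\<close>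
  define z where "z = (\<lambda>x. u x + k * L x)"
  define h where "h = (\<lambda>x. k * g x + w x)"
  have zL: "L2 \<Omega> z" and hL: "L2 \<Omega> h" unfolding z_def h_def using u L g w by (simp_all add: L2_add L2_scale)
  have "k * ip \<Omega> (\<lambda>x. g x + w x / k) (\<lambda>x. u x / k + L x) = (\<integral>x. h x * z x / k \<partial>lebesgue_on \<Omega>)"
    unfolding ip_def using k by (simp add: h_def z_def field_simps flip: integral_mult_right_zero)
  also have "\<dots> = ip \<Omega> h z / k" by (simp add: ip_def)
  finally have "ip \<Omega> u u + 2 * k * ip \<Omega> u L + k^2 * ip \<Omega> L L + k * P = ip \<Omega> h z"
    using eq k by (simp add: ip_commute[of \<Omega> L u] field_simps power2_eq_square)
  moreover have "ip \<Omega> z z = ip \<Omega> u u + 2 * k * ip \<Omega> u L + k^2 * ip \<Omega> L L"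
    unfolding z_def using ip_self_expand[OF u L, of 1 k] by simp
  moreover have "0 \<le> k * (2 * ip \<Omega> u L + P)" and "0 \<le> k * P" and "0 \<le> k^2 * ip \<Omega> L L"
    using k coercive P by (simp_all add: ip_self_nonneg)
  ultimately have uu: "ip \<Omega> u u \<le> ip \<Omega> h z" and zz: "ip \<Omega> z z \<le> ip \<Omega> h z"
    by (simp_all add: algebra_simps)
  have hz: "ip \<Omega> h z \<le> nrm \<Omega> h * nrm \<Omega> z" using ip_Cauchy_Schwarz[OF hL zL] by simp
  have zh: "nrm \<Omega> z \<le> nrm \<Omega> h"
  proof (cases "nrm \<Omega> z = 0")
    case False
    then have "nrm \<Omega> z * nrm \<Omega> z \<le> nrm \<Omega> h * nrm \<Omega> z"
      using zz hz by (simp add: nrm_power2[symmetric] power2_eq_square)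
    then show ?thesis using False nrm_nonneg[of \<Omega> z] by simp
  qed (simp add: nrm_nonneg)
  have "(nrm \<Omega> u)^2 = ip \<Omega> u u" by (rule nrm_power2)
  also have "\<dots> \<le> nrm \<Omega> h * nrm \<Omega> z" using uu hz by linarith
  also have "\<dots> \<le> (nrm \<Omega> h)^2"
    using mult_left_mono[OF zh nrm_nonneg[of \<Omega> h]] by (simp add: power2_eq_square)
  finally have "(nrm \<Omega> u)^2 \<le> (nrm \<Omega> h)^2" .
  then have "nrm \<Omega> u \<le> nrm \<Omega> h" using nrm_nonneg by (rule power2_le_imp_le)
  also have "\<dots> \<le> k * nrm \<Omega> g + nrm \<Omega> w"
    using nrm_triangle[OF L2_scale[OF g, of k] w] k by (simp add: h_def nrm_scale)
  finally show ?thesis .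
qed

lemma Bform_step_norm_bound:
  fixes \<Omega> :: "(real^'d) set" and A :: "real^'d \<Rightarrow> real^'d^'d"
  assumes \<Omega>: "\<Omega> \<in> lmeasurable"
    and A_Linf: "\<forall>i j. Linf \<Omega> (\<lambda>x. A x $ i $ j)"
    and A_sym: "AE x in lebesgue_on \<Omega>. transpose (A x) = A x"
    and \<alpha>0: "\<alpha>0 > 0" and A_ell: "AE x in lebesgue_on \<Omega>. lambda_min (A x) \<ge> \<alpha>0"
    and \<beta>: "\<forall>i. Linf \<Omega> (\<lambda>x. \<beta> x $ i)" and \<gamma>: "Linf \<Omega> \<gamma>"
    and div\<beta>: "\<exists>D. is_weak_div \<Omega> \<beta> D \<and> Linf \<Omega> (\<lambda>x. D x / 2 + \<gamma> x)
                  \<and> (AE x in lebesgue_on \<Omega>. D x / 2 + \<gamma> x \<ge> 0)"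
    and U: "(u, \<sigma>) \<in> Uspace \<Omega>" and k: "k > 0" and g: "L2 \<Omega> g" and w: "L2 \<Omega> w"
    and eq: "Bform \<Omega> A \<beta> \<gamma> k (u, \<sigma>) (u, \<sigma>) = Fform \<Omega> \<beta> \<gamma> k (u, \<sigma>) g w"
  shows "nrm \<Omega> u \<le> k * nrm \<Omega> g + nrm \<Omega> w"
proof -
  have u: "H10 \<Omega> u" and \<sigma>: "Hdiv \<Omega> \<sigma>" using U by (simp_all add: Uspace_def)
  obtain D where D: "is_weak_div \<Omega> \<beta> D" "Linf \<Omega> (\<lambda>x. D x / 2 + \<gamma> x)"
      "AE x in lebesgue_on \<Omega>. D x / 2 + \<gamma> x \<ge> 0"
    using div\<beta> by blast
  show ?thesis
  proof (rule implicit_step_norm_bound[OF k H10_L2[OF u] Lop_L2[OF u \<sigma>] g w ipv_self_nonneg])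
    show "0 \<le> 2 * ip \<Omega> u (Lop \<Omega> \<beta> \<gamma> (u, \<sigma>)) + ipv \<Omega> (Flux \<Omega> A (u, \<sigma>)) (Flux \<Omega> A (u, \<sigma>))"
      using \<beta> by (intro Lop_Flux_coercive[OF \<Omega> u \<sigma> A_Linf A_sym \<alpha>0 A_ell _ \<gamma> D]) blast
  qed (use eq \<beta> \<gamma> in \<open>simp_all add: Bform_def bform_def btilde_def Fform_def\<close>)
qed

lemma le_sum_of_increments:
  fixes a c :: "nat \<Rightarrow> real"
  assumes step: "\<And>n. n \<in> {1..N} \<Longrightarrow> a n \<le> c n + a (n - 1)"
  shows "n \<le> N \<Longrightarrow> a n \<le> (\<Sum>j=1..n. c j) + a 0"
proof (induction n)
  case (Suc n)
  then show ?case using step[of "Suc n"] by simp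
qed simp

theorem theorem3p1:
  fixes \<Omega> :: "(real^'d) set"
    and A :: "real^'d \<Rightarrow> real^'d^'d" and \<beta> :: "real^'d \<Rightarrow> real^'d" and \<gamma> :: "real^'d \<Rightarrow> real"
    and \<alpha>0 T :: real and N :: nat and t :: "nat \<Rightarrow> real"
    and f :: "real \<Rightarrow> real^'d \<Rightarrow> real"
    and Uh :: "nat \<Rightarrow> 'd pr set"
    and u :: "nat \<Rightarrow> real^'d \<Rightarrow> real" and \<sigma> :: "nat \<Rightarrow> real^'d \<Rightarrow> real^'d"
  assumes dom: "lipschitz_domain \<Omega>" and poly: "polygonal_boundary \<Omega>"
    and A_Linf: "\<forall>i j. Linf \<Omega> (\<lambda>x. A x $ i $ j)"
    and A_sym: "AE x in lebesgue_on \<Omega>. transpose (A x) = A x"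
    and \<alpha>0_pos: "\<alpha>0 > 0"
    and A_ell: "AE x in lebesgue_on \<Omega>. lambda_min (A x) \<ge> \<alpha>0"
    and \<beta>_Linf: "\<forall>i. Linf \<Omega> (\<lambda>x. \<beta> x $ i)"
    and \<gamma>_Linf: "Linf \<Omega> \<gamma>"
    and div\<beta>: "\<exists>D. is_weak_div \<Omega> \<beta> D \<and> Linf \<Omega> (\<lambda>x. D x / 2 + \<gamma> x)
                  \<and> (AE x in lebesgue_on \<Omega>. D x / 2 + \<gamma> x \<ge> 0)"
    and f_L2: "\<forall>s\<in>{0..T}. L2 \<Omega> (f s)"
    and f_cont: "\<forall>s\<in>{0..T}. ((\<lambda>r. nrm \<Omega> (\<lambda>x. f r x - f s x)) \<longlongrightarrow> 0) (at s within {0..T})"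
    and u0: "L2 \<Omega> (u 0)"
    and t0: "t 0 = 0" and tN: "t N = T" and t_mono: "\<forall>n<N. t n < t (Suc n)"
    and Uh_sub: "\<forall>n\<in>{1..N}. closed_subspace_U \<Omega> (Uh n)"
    and sol_in: "\<forall>n\<in>{1..N}. (u n, \<sigma> n) \<in> Uh n"
    and sol_eq: "\<forall>n\<in>{1..N}. \<forall>v\<in>Uh n.
        Bform \<Omega> A \<beta> \<gamma> (t n - t (n - 1)) (u n, \<sigma> n) v
          = Fform \<Omega> \<beta> \<gamma> (t n - t (n - 1)) v (f (t n)) (u (n - 1))"
  shows "\<forall>n\<in>{1..N}. nrm \<Omega> (u n) \<le> (\<Sum>j=1..n. (t j - t (j - 1)) * nrm \<Omega> (f (t j))) + nrm \<Omega> (u 0)"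
proof -
  have \<Omega>: "\<Omega> \<in> lmeasurable" using dom by (simp add: lipschitz_domain_def lmeasurable_open)
  have t_mono_le: "t i \<le> t j" if "i \<le> j" "j \<le> N" for i j
  proof (rule lift_Suc_mono_le_ivl[where N="{..<N}"])
    show "t n \<le> t (Suc n)" if "n \<in> {..<N}" for n using t_mono that by (simp add: less_imp_le)
  qed (use that in auto)
  have U: "(u n, \<sigma> n) \<in> Uspace \<Omega>" if "n \<in> {1..N}" for n
  proof -
    have "Uh n \<subseteq> Uspace \<Omega>" using Uh_sub that by (simp add: closed_subspace_U_def)
    then show ?thesis using sol_in that by blast
  qed
  have u_L2: "L2 \<Omega> (u n)" if "n \<le> N" for n
    using u0 U[of n] that by (cases "n = 0") (auto simp: Uspace_def H10_L2)
  have step: "nrm \<Omega> (u n) \<le> (t n - t (n - 1)) * nrm \<Omega> (f (t n)) + nrm \<Omega> (u (n - 1))"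
    if n: "n \<in> {1..N}" for n
  proof (rule Bform_step_norm_bound[OF \<Omega> A_Linf A_sym \<alpha>0_pos A_ell \<beta>_Linf \<gamma>_Linf div\<beta> U[OF n]])
    show "t n - t (n - 1) > 0" using t_mono n by (cases n) auto
    show "L2 \<Omega> (f (t n))" using f_L2 t_mono_le[of 0 n] t_mono_le[of n N] n t0 tN by auto
    show "L2 \<Omega> (u (n - 1))" using u_L2[of "n - 1"] n by auto
  qed (use sol_eq sol_in n in blast)
  show ?thesis
    using le_sum_of_increments[where a="\<lambda>n. nrm \<Omega> (u n)" and N=N, OF step] by simp
qed

end
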